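(* Let $p>2$ be an integer, $\theta\in(0,1)$, $\eta\ge0$, let $\bm X\in\mathbb R^{n\times r}$ have i.i.d. $\mathcal{BG}(\theta)$ entries, $\bm G\in\mathbb R^{n\times r}$ i.i.d. $\mathcal N(0,\eta^2)$ entries independent of $\bm X$, $\bm Y=\bm X+\bm G$, and $\gamma_p=2^{p/2}\Gamma(\frac{p+1}{2})/\sqrt\pi$. For every $\bm Q\in\mathbb O(n)$ there exists $\bm P\in\mathrm{SP}(n)$ with $$\theta(1+\eta^2)^{p/2}+(1-\theta)\eta^p-\frac{1}{nr\gamma_p}\mathbb E\|\bm Q\bm Y\|_p^p\ge\frac{\theta(1-\theta)}{2nC_{\eta,p}}\|\bm Q-\bm P\|_F^2,$$ where $C_{\eta,p}=\big((1+\eta^2)^{p/2}+\eta^p-2(0.5+\eta^2)^{p/2}\big)^{-1}$.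
   Context: $\mathcal{BG}(\theta)$ is the law of $b\cdot g$ with $b\sim\mathrm{Ber}(\theta)$, $g\sim\mathcal N(0,1)$ independent. $\mathbb O(n)$: real orthogonal $n\times n$ matrices; $\mathrm{SP}(n)$: signed permutation matrices; $\|\bm M\|_p^p=\sum_{i,j}|M_{ij}|^p$; $\|\cdot\|_F$ the Frobenius norm; $\Gamma$ the Gamma function. *)

theory Defs
  imports "HOL-Analysis.Analysis" "HOL-Probability.Probability"
begin

definition std_normal_measure :: "real measure" where
  "std_normal_measure = density lborel std_normal_density"

definition BG :: "real \<Rightarrow> real measure" where
  "BG \<theta> = distr (measure_pmf (bernoulli_pmf \<theta>) \<Otimes>\<^sub>M std_normal_measure) borel
              (\<lambda>(b, g). (if b then 1 else 0) * g)"

text \<open>Law of the pair (X, Z) where X has i.i.d. BG(theta) entries and Z has i.i.d.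
  N(0,1) entries, independent of X; the noise is G = eta * Z (i.i.d. N(0,eta^2), also for eta = 0).\<close>
definition XZ_law :: "real \<Rightarrow> (('n::finite \<times> 'r::finite \<Rightarrow> real) \<times> ('n \<times> 'r \<Rightarrow> real)) measure" where
  "XZ_law \<theta> = (PiM UNIV (\<lambda>_. BG \<theta>)) \<Otimes>\<^sub>M (PiM UNIV (\<lambda>_. std_normal_measure))"

definition Y_mat :: "real \<Rightarrow> ('n::finite \<times> 'r::finite \<Rightarrow> real) \<Rightarrow> ('n \<times> 'r \<Rightarrow> real) \<Rightarrow> real^'r^'n" where
  "Y_mat \<eta> x z = (\<chi> i j. x (i, j) + \<eta> * z (i, j))"

definition entry_pnorm_pow :: "nat \<Rightarrow> real^'c^'r \<Rightarrow> real" where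
  "entry_pnorm_pow p M = (\<Sum>i\<in>UNIV. \<Sum>j\<in>UNIV. \<bar>M $ i $ j\<bar> ^ p)"

definition frob_norm :: "real^'c^'r \<Rightarrow> real" where
  "frob_norm M = sqrt (\<Sum>i\<in>UNIV. \<Sum>j\<in>UNIV. (M $ i $ j)\<^sup>2)"

definition signed_perm_matrix :: "real^'n^'n \<Rightarrow> bool" where
  "signed_perm_matrix P \<longleftrightarrow> (\<exists>\<sigma> s. bij (\<sigma> :: 'n \<Rightarrow> 'n) \<and> (\<forall>i. s i \<in> {-1, 1::real}) \<and>
      (\<forall>i j. P $ i $ j = (if j = \<sigma> i then s i else 0)))"

definition gamma_p :: "nat \<Rightarrow> real" where
  "gamma_p p = 2 powr (real p / 2) * Gamma ((real p + 1) / 2) / sqrt pi"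

definition C_eta_p :: "real \<Rightarrow> nat \<Rightarrow> real" where
  "C_eta_p \<eta> p = inverse ((1 + \<eta>\<^sup>2) powr (real p / 2) + \<eta> ^ p - 2 * (0.5 + \<eta>\<^sup>2) powr (real p / 2))"

end

theory Submission
  imports Defs
begin

text \<open>Write phi(s) = (eta^2 + s)^(p/2). Conditionally on the support B of the j-th column
  of X, the entry (QY)_ij is a centred Gaussian of variance eta^2 + s with s = sum_{k in B} Q_ik^2,
  so E|(QY)_ij|^p = gamma_p E phi(s). Since phi is convex on [0,1] it lies below its chord by
  s(1 - s) times its midpoint deficit 1/C_{eta,p}, and E s(1 - s) = theta(1 - theta)(1 - sum_k Q_ik^4).
  Hence the left-hand side is at least theta(1 - theta)(n - sum_ik Q_ik^4)/(n C_{eta,p}).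
  The matrix (Q_ik^2) is doubly stochastic, so a Birkhoff-type argument based on Hall's theorem
  yields a permutation sigma with sum_ik Q_ik^4 <= sum_i Q_{i sigma(i)}^2 <= sum_i |Q_{i sigma(i)}|,
  and the signed permutation P following the signs of the Q_{i sigma(i)} has
  ||Q - P||_F^2 = 2n - 2 sum_i |Q_{i sigma(i)}|.\<close>

section \<open>Gaussian smoothing\<close>

text \<open>\<open>gauss_smooth v h s\<close> is \<open>E h(s + \<surd>v g)\<close> for \<open>g\<close> standard normal; \<open>v = 0\<close> is split off
  because \<open>normal_density\<close> with zero deviation is not a probability density.\<close>

definition gauss_smooth :: "real \<Rightarrow> (real \<Rightarrow> ennreal) \<Rightarrow> real \<Rightarrow> ennreal" where
  "gauss_smooth v h s =
     (if v = 0 then h s else \<integral>\<^sup>+y. ennreal (normal_density 0 (sqrt v) y) * h (s + y) \<partial>lborel)"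

lemma borel_measurable_gauss_smooth [measurable]:
  assumes [measurable]: "h \<in> borel_measurable borel"
  shows "gauss_smooth v h \<in> borel_measurable borel"
  unfolding gauss_smooth_def by measurable

lemma gauss_smooth_0 [simp]: "gauss_smooth 0 h s = h s"
  by (simp add: gauss_smooth_def)

lemma normal_density_scale:
  assumes "c \<noteq> 0"
  shows "\<bar>c\<bar> * normal_density 0 \<bar>c\<bar> (c * x) = std_normal_density x"
proof -
  have "sqrt (2 * pi * \<bar>c\<bar>\<^sup>2) = sqrt (2 * pi) * \<bar>c\<bar>"
    by (simp add: real_sqrt_mult)
  moreover have "(c * x)\<^sup>2 / (2 * \<bar>c\<bar>\<^sup>2) = x\<^sup>2 / 2"
    using assms by (simp add: power_mult_distrib)
  ultimately show ?thesis
    using assms by (simp add: normal_density_def)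
qed

lemma nn_integral_std_normal_density_scale:
  assumes "c \<noteq> 0" and [measurable]: "F \<in> borel_measurable borel"
  shows "(\<integral>\<^sup>+g. ennreal (std_normal_density g) * F (c * g) \<partial>lborel)
       = (\<integral>\<^sup>+y. ennreal (normal_density 0 \<bar>c\<bar> y) * F y \<partial>lborel)"
proof -
  have "(\<integral>\<^sup>+y. ennreal (normal_density 0 \<bar>c\<bar> y) * F y \<partial>lborel)
      = ennreal \<bar>c\<bar> * (\<integral>\<^sup>+x. ennreal (normal_density 0 \<bar>c\<bar> (0 + c * x)) * F (0 + c * x) \<partial>lborel)"
    by (rule nn_integral_real_affine) (use assms in auto)
  also have "\<dots> = (\<integral>\<^sup>+x. ennreal \<bar>c\<bar> * ennreal (normal_density 0 \<bar>c\<bar> (c * x)) * F (c * x) \<partial>lborel)"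
    by (subst nn_integral_cmult[symmetric]) (auto simp: mult.assoc)
  also have "\<dots> = (\<integral>\<^sup>+g. ennreal (std_normal_density g) * F (c * g) \<partial>lborel)"
    using normal_density_scale[OF assms(1)] by (simp add: ennreal_mult[symmetric])
  finally show ?thesis ..
qed

lemma nn_integral_normal_density_convolution:
  assumes "0 < \<sigma>" "0 < \<tau>" and [measurable]: "h \<in> borel_measurable borel"
  shows "(\<integral>\<^sup>+u. ennreal (normal_density 0 \<tau> u) *
            (\<integral>\<^sup>+y. ennreal (normal_density 0 \<sigma> y) * h (s + u + y) \<partial>lborel) \<partial>lborel)
       = (\<integral>\<^sup>+w. ennreal (normal_density 0 (sqrt (\<sigma>\<^sup>2 + \<tau>\<^sup>2)) w) * h (s + w) \<partial>lborel)"
proof -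
  have shift: "(\<integral>\<^sup>+y. ennreal (normal_density 0 \<sigma> y) * h (s + u + y) \<partial>lborel)
      = (\<integral>\<^sup>+w. ennreal (normal_density 0 \<sigma> (w - u)) * h (s + w) \<partial>lborel)" for u
    using nn_integral_real_affine[of "\<lambda>w. ennreal (normal_density 0 \<sigma> (w - u)) * h (s + w)" 1 u]
    by (simp add: add.assoc)
  have "(\<integral>\<^sup>+u. ennreal (normal_density 0 \<tau> u) *
            (\<integral>\<^sup>+y. ennreal (normal_density 0 \<sigma> y) * h (s + u + y) \<partial>lborel) \<partial>lborel)
     = (\<integral>\<^sup>+u. (\<integral>\<^sup>+w. ennreal (normal_density 0 \<tau> u) *
            (ennreal (normal_density 0 \<sigma> (w - u)) * h (s + w)) \<partial>lborel) \<partial>lborel)"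
    by (simp add: shift nn_integral_cmult)
  also have "\<dots> = (\<integral>\<^sup>+w. (\<integral>\<^sup>+u. ennreal (normal_density 0 \<tau> u) *
            (ennreal (normal_density 0 \<sigma> (w - u)) * h (s + w)) \<partial>lborel) \<partial>lborel)"
    by (rule lborel_pair.Fubini'[symmetric]) measurable
  also have "\<dots> = (\<integral>\<^sup>+w. h (s + w) *
            (\<integral>\<^sup>+u. ennreal (normal_density 0 \<sigma> (w - u) * normal_density 0 \<tau> u) \<partial>lborel) \<partial>lborel)"
    by (subst nn_integral_cmult[symmetric])
       (auto intro!: nn_integral_cong simp: ennreal_mult' mult_ac)
  also have "\<dots> = (\<integral>\<^sup>+w. ennreal (normal_density 0 (sqrt (\<sigma>\<^sup>2 + \<tau>\<^sup>2)) w) * h (s + w) \<partial>lborel)"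
    using conv_normal_density_zero_mean[OF assms(1,2)]
    by (auto intro!: nn_integral_cong simp: fun_eq_iff mult.commute)
  finally show ?thesis .
qed

lemma prob_space_std_normal_measure: "prob_space std_normal_measure"
  unfolding std_normal_measure_def by (rule prob_space_normal_density) simp

lemma space_std_normal_measure [simp]: "space std_normal_measure = UNIV"
  and sets_std_normal_measure [simp]: "sets std_normal_measure = sets borel"
  unfolding std_normal_measure_def by auto

lemma nn_integral_std_normal_measure:
  assumes [measurable]: "f \<in> borel_measurable borel"
  shows "(\<integral>\<^sup>+g. f g \<partial>std_normal_measure) = (\<integral>\<^sup>+g. ennreal (std_normal_density g) * f g \<partial>lborel)"
  unfolding std_normal_measure_def by (subst nn_integral_density) auto

lemma emeasure_std_normal_measure_UNIV [simp]: "emeasure std_normal_measure UNIV = 1"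
  using prob_space.emeasure_space_1[OF prob_space_std_normal_measure] by simp

lemma gauss_smooth_std_normal_shift:
  assumes "v \<ge> 0" and [measurable]: "h \<in> borel_measurable borel"
  shows "(\<integral>\<^sup>+g. gauss_smooth v h (s + c * g) \<partial>std_normal_measure) = gauss_smooth (v + c\<^sup>2) h s"
proof (cases "c = 0")
  case c: False
  show ?thesis
  proof (cases "v = 0")
    case True
    have "(\<integral>\<^sup>+g. gauss_smooth v h (s + c * g) \<partial>std_normal_measure)
        = (\<integral>\<^sup>+g. ennreal (std_normal_density g) * h (s + c * g) \<partial>lborel)"
      using True by (subst nn_integral_std_normal_measure) auto
    also have "\<dots> = (\<integral>\<^sup>+y. ennreal (normal_density 0 \<bar>c\<bar> y) * h (s + y) \<partial>lborel)"
      by (rule nn_integral_std_normal_density_scale[OF c, where F = "\<lambda>y. h (s + y)"]) measurable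
    finally show ?thesis
      using True c by (simp add: gauss_smooth_def)
  next
    case False
    then have v: "v > 0" using assms(1) by simp
    have "(\<integral>\<^sup>+g. gauss_smooth v h (s + c * g) \<partial>std_normal_measure)
      = (\<integral>\<^sup>+g. ennreal (std_normal_density g) *
           (\<lambda>u. \<integral>\<^sup>+y. ennreal (normal_density 0 (sqrt v) y) * h (s + u + y) \<partial>lborel) (c * g) \<partial>lborel)"
      using v by (subst nn_integral_std_normal_measure) (auto simp: gauss_smooth_def add.assoc)
    also have "\<dots> = (\<integral>\<^sup>+u. ennreal (normal_density 0 \<bar>c\<bar> u) *
           (\<integral>\<^sup>+y. ennreal (normal_density 0 (sqrt v) y) * h (s + u + y) \<partial>lborel) \<partial>lborel)"
      by (rule nn_integral_std_normal_density_scale[OF c]) measurable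
    also have "\<dots> = (\<integral>\<^sup>+w. ennreal (normal_density 0 (sqrt ((sqrt v)\<^sup>2 + \<bar>c\<bar>\<^sup>2)) w) * h (s + w) \<partial>lborel)"
      by (rule nn_integral_normal_density_convolution) (use v c in auto)
    moreover have "v + c\<^sup>2 > 0"
      by (rule add_pos_nonneg[OF v zero_le_power2])
    ultimately show ?thesis
      using v by (simp add: gauss_smooth_def)
  qed
qed simp

lemma sets_BG [simp]: "sets (BG \<theta>) = sets borel"
  unfolding BG_def by simp

lemma borel_measurable_bernoulli_times [measurable]:
  "(\<lambda>(b, g). (if b then 1 else 0) * g :: real)
     \<in> borel_measurable (measure_pmf q \<Otimes>\<^sub>M std_normal_measure)"
proof -
  have "(\<lambda>(b, g). (if b then 1 else 0) * g :: real)
      \<in> borel_measurable (count_space UNIV \<Otimes>\<^sub>M (borel :: real measure))"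
    by measurable
  moreover have "sets (measure_pmf q \<Otimes>\<^sub>M std_normal_measure)
      = sets (count_space UNIV \<Otimes>\<^sub>M (borel :: real measure))"
    by (rule sets_pair_measure_cong) auto
  ultimately show ?thesis
    by (simp add: measurable_def space_pair_measure)
qed

lemma prob_space_BG: "0 \<le> \<theta> \<Longrightarrow> \<theta> \<le> 1 \<Longrightarrow> prob_space (BG \<theta>)"
  unfolding BG_def
  by (intro prob_space.prob_space_distr prob_space_pair prob_space_std_normal_measure
      prob_space_measure_pmf) auto

lemma gauss_smooth_BG_shift:
  assumes "0 \<le> \<theta>" "\<theta> \<le> 1" "v \<ge> 0" and [measurable]: "h \<in> borel_measurable borel"
  shows "(\<integral>\<^sup>+x. gauss_smooth v h (s + c * x) \<partial>BG \<theta>)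
       = ennreal \<theta> * gauss_smooth (v + c\<^sup>2) h s + ennreal (1 - \<theta>) * gauss_smooth v h s"
proof -
  interpret N: sigma_finite_measure std_normal_measure
    by (intro prob_space_imp_sigma_finite prob_space_std_normal_measure)
  have "(\<integral>\<^sup>+x. gauss_smooth v h (s + c * x) \<partial>BG \<theta>)
      = (\<integral>\<^sup>+w. gauss_smooth v h (s + c * (case w of (b, g) \<Rightarrow> (if b then 1 else 0) * g))
           \<partial>(measure_pmf (bernoulli_pmf \<theta>) \<Otimes>\<^sub>M std_normal_measure))"
    unfolding BG_def by (subst nn_integral_distr) auto
  also have "\<dots> = (\<integral>\<^sup>+b. (\<integral>\<^sup>+g. gauss_smooth v h (s + c * ((if b then 1 else 0) * g))
           \<partial>std_normal_measure) \<partial>measure_pmf (bernoulli_pmf \<theta>))"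
    by (subst N.nn_integral_fst[symmetric]) (auto simp: case_prod_beta)
  also have "\<dots> = ennreal \<theta> * gauss_smooth (v + c\<^sup>2) h s + ennreal (1 - \<theta>) * gauss_smooth v h s"
    using assms gauss_smooth_std_normal_shift[OF assms(3,4), of s c] by (simp add: mult.commute)
  finally show ?thesis .
qed

section \<open>Linear forms in Bernoulli-Gaussian and Gaussian vectors\<close>

lemma borel_measurable_linear_form_PiM:
  assumes "sets M = sets borel" "K \<subseteq> I"
  shows "(\<lambda>z. \<Sum>k\<in>K. d k * z k :: real) \<in> borel_measurable (PiM I (\<lambda>_. M))"
proof -
  have "(\<lambda>z. z k) \<in> borel_measurable (PiM I (\<lambda>_. M))" if "k \<in> I" for k
    using measurable_component_singleton[OF that, of "\<lambda>_. M"] measurable_cong_sets[OF refl assms(1)]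
    by blast
  then show ?thesis
    using assms(2) by (intro borel_measurable_sum borel_measurable_times) auto
qed

lemma borel_measurable_gauss_smooth_linear_form:
  assumes "sets M = sets borel" "K \<subseteq> I" "h \<in> borel_measurable borel"
  shows "(\<lambda>z. gauss_smooth v h (s + (\<Sum>k\<in>K. d k * z k))) \<in> borel_measurable (PiM I (\<lambda>_. M))"
  using borel_measurable_linear_form_PiM[OF assms(1,2)] assms(3) by measurable

lemma sum_insert_fun_upd:
  assumes "finite K" "i \<notin> K"
  shows "(\<Sum>k\<in>insert i K. d k * (x(i := y)) k) = (\<Sum>k\<in>K. d k * x k) + d i * y"
proof -
  have "(\<Sum>k\<in>K. d k * (x(i := y)) k) = (\<Sum>k\<in>K. d k * x k)"
    using assms(2) by (intro sum.cong) auto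
  then show ?thesis
    using assms by (simp add: add.commute)
qed

lemma gauss_smooth_std_normal_linear_form:
  assumes "finite K" "v \<ge> 0" and [measurable]: "h \<in> borel_measurable borel"
  shows "(\<integral>\<^sup>+z. gauss_smooth v h (s + (\<Sum>k\<in>K. d k * z k)) \<partial>PiM K (\<lambda>_. std_normal_measure))
       = gauss_smooth (v + (\<Sum>k\<in>K. (d k)\<^sup>2)) h s"
  using assms(1,2)
proof (induction K arbitrary: v s rule: finite_induct)
  case (insert i K)
  interpret product_sigma_finite "\<lambda>_. std_normal_measure"
    by (simp add: product_sigma_finite_def prob_space_imp_sigma_finite prob_space_std_normal_measure)
  have "(\<integral>\<^sup>+z. gauss_smooth v h (s + (\<Sum>k\<in>insert i K. d k * z k)) \<partial>PiM (insert i K) (\<lambda>_. std_normal_measure))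
     = (\<integral>\<^sup>+x. (\<integral>\<^sup>+y. gauss_smooth v h (s + (\<Sum>k\<in>insert i K. d k * (x(i := y)) k))
           \<partial>std_normal_measure) \<partial>PiM K (\<lambda>_. std_normal_measure))"
    by (rule product_nn_integral_insert)
       (use insert borel_measurable_gauss_smooth_linear_form[of std_normal_measure "insert i K" "insert i K" h v s d]
        in auto)
  also have "\<dots> = (\<integral>\<^sup>+x. gauss_smooth (v + (d i)\<^sup>2) h (s + (\<Sum>k\<in>K. d k * x k))
           \<partial>PiM K (\<lambda>_. std_normal_measure))"
    using gauss_smooth_std_normal_shift[OF insert.prems assms(3)]
    by (simp only: sum_insert_fun_upd[OF insert.hyps] add.assoc[symmetric])
  also have "\<dots> = gauss_smooth (v + (\<Sum>k\<in>insert i K. (d k)\<^sup>2)) h s"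
    using insert by (simp add: add.assoc)
  finally show ?case .
qed (simp add: PiM_empty)

text \<open>The probability that an i.i.d. \<open>Ber(\<theta>)\<close> vector indexed by \<open>K\<close> has support \<open>B\<close>.\<close>

definition subset_weight :: "real \<Rightarrow> 'k set \<Rightarrow> 'k set \<Rightarrow> real" where
  "subset_weight \<theta> K B = \<theta> ^ card B * (1 - \<theta>) ^ card (K - B)"

lemma subset_weight_nonneg: "0 \<le> \<theta> \<Longrightarrow> \<theta> \<le> 1 \<Longrightarrow> 0 \<le> subset_weight \<theta> K B"
  by (simp add: subset_weight_def)

lemma subset_weight_insert_notin:
  assumes "finite K" "i \<notin> K" "B \<subseteq> K"
  shows "subset_weight \<theta> (insert i K) B = (1 - \<theta>) * subset_weight \<theta> K B"
proof -
  have "insert i K - B = insert i (K - B)"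
    using assms by auto
  then show ?thesis
    using assms by (simp add: subset_weight_def)
qed

lemma subset_weight_insert:
  assumes "finite K" "i \<notin> K" "B \<subseteq> K"
  shows "subset_weight \<theta> (insert i K) (insert i B) = \<theta> * subset_weight \<theta> K B"
proof -
  have "i \<notin> B"
    using assms by blast
  then have "insert i K - insert i B = K - B" "card (insert i B) = Suc (card B)"
    using assms finite_subset[OF assms(3)] by auto
  then show ?thesis
    by (simp add: subset_weight_def)
qed

lemma sum_Pow_insert:
  assumes "finite K" "i \<notin> K"
  shows "sum F (Pow (insert i K)) = sum F (Pow K) + (\<Sum>B\<in>Pow K. F (insert i B))"
proof -
  have "inj_on (insert i) (Pow K)"
    using assms(2) by (intro inj_onI) (metis PowD in_mono insert_ident)
  moreover have "Pow K \<inter> insert i ` Pow K = {}"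
    using assms by auto
  ultimately show ?thesis
    using assms by (simp add: Pow_insert sum.union_disjoint sum.reindex)
qed

lemma sum_Pow_insert_weighted:
  fixes w :: "'k set \<Rightarrow> 'k set \<Rightarrow> 'a::comm_semiring_1"
  assumes "finite K" "i \<notin> K"
    and "\<And>B. B \<subseteq> K \<Longrightarrow> w (insert i K) B = a * w K B"
    and "\<And>B. B \<subseteq> K \<Longrightarrow> w (insert i K) (insert i B) = b * w K B"
  shows "(\<Sum>B\<in>Pow (insert i K). w (insert i K) B * F B)
       = a * (\<Sum>B\<in>Pow K. w K B * F B) + b * (\<Sum>B\<in>Pow K. w K B * F (insert i B))"
  unfolding sum_Pow_insert[OF assms(1,2)] sum_distrib_left
  using assms(3,4) by (intro arg_cong2[where f = "(+)"] sum.cong) (auto simp: mult.assoc)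

lemma sum_Pow_insert_subset_weight:
  assumes "finite K" "i \<notin> K"
  shows "(\<Sum>B\<in>Pow (insert i K). subset_weight \<theta> (insert i K) B * F B)
       = (1 - \<theta>) * (\<Sum>B\<in>Pow K. subset_weight \<theta> K B * F B)
         + \<theta> * (\<Sum>B\<in>Pow K. subset_weight \<theta> K B * F (insert i B))"
  using assms by (rule sum_Pow_insert_weighted)
    (use assms in \<open>simp_all add: subset_weight_insert_notin subset_weight_insert\<close>)

lemma sum_Pow_insert_subset_weight_ennreal:
  assumes "finite K" "i \<notin> K" "0 \<le> \<theta>" "\<theta> \<le> 1"
  shows "(\<Sum>B\<in>Pow (insert i K). ennreal (subset_weight \<theta> (insert i K) B) * F B)
       = ennreal (1 - \<theta>) * (\<Sum>B\<in>Pow K. ennreal (subset_weight \<theta> K B) * F B)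
         + ennreal \<theta> * (\<Sum>B\<in>Pow K. ennreal (subset_weight \<theta> K B) * F (insert i B))"
  using assms(1,2)
  by (rule sum_Pow_insert_weighted[where w = "\<lambda>K B. ennreal (subset_weight \<theta> K B)"])
    (use assms in \<open>simp_all add: subset_weight_insert_notin subset_weight_insert subset_weight_nonneg
      ennreal_mult\<close>)

lemma gauss_smooth_BG_linear_form:
  assumes "finite K" "v \<ge> 0" and [measurable]: "h \<in> borel_measurable borel"
    and \<theta>: "0 \<le> \<theta>" "\<theta> \<le> 1"
  shows "(\<integral>\<^sup>+x. gauss_smooth v h (s + (\<Sum>k\<in>K. c k * x k)) \<partial>PiM K (\<lambda>_. BG \<theta>))
       = (\<Sum>B\<in>Pow K. ennreal (subset_weight \<theta> K B) * gauss_smooth (v + (\<Sum>k\<in>B. (c k)\<^sup>2)) h s)"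
  using assms(1,2)
proof (induction K arbitrary: v rule: finite_induct)
  case (insert i K)
  interpret product_sigma_finite "\<lambda>_. BG \<theta>"
    by (simp add: product_sigma_finite_def prob_space_imp_sigma_finite prob_space_BG[OF \<theta>])
  let ?L = "\<lambda>x. s + (\<Sum>k\<in>K. c k * x k)"
  have [measurable]: "(\<lambda>x. gauss_smooth u h (?L x)) \<in> borel_measurable (PiM K (\<lambda>_. BG \<theta>))" for u
    using borel_measurable_gauss_smooth_linear_form[of "BG \<theta>" K K h u s c] by simp
  have "(\<integral>\<^sup>+x. gauss_smooth v h (s + (\<Sum>k\<in>insert i K. c k * x k)) \<partial>PiM (insert i K) (\<lambda>_. BG \<theta>))
     = (\<integral>\<^sup>+x. (\<integral>\<^sup>+y. gauss_smooth v h (s + (\<Sum>k\<in>insert i K. c k * (x(i := y)) k)) \<partial>BG \<theta>)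
          \<partial>PiM K (\<lambda>_. BG \<theta>))"
    by (rule product_nn_integral_insert)
       (use insert borel_measurable_gauss_smooth_linear_form[of "BG \<theta>" "insert i K" "insert i K" h v s c]
        in auto)
  also have "\<dots> = (\<integral>\<^sup>+x. ennreal \<theta> * gauss_smooth (v + (c i)\<^sup>2) h (?L x)
                        + ennreal (1 - \<theta>) * gauss_smooth v h (?L x) \<partial>PiM K (\<lambda>_. BG \<theta>))"
    using gauss_smooth_BG_shift[OF \<theta> insert.prems assms(3)]
    by (simp only: sum_insert_fun_upd[OF insert.hyps] add.assoc[symmetric])
  also have "\<dots> = ennreal \<theta> * (\<integral>\<^sup>+x. gauss_smooth (v + (c i)\<^sup>2) h (?L x) \<partial>PiM K (\<lambda>_. BG \<theta>))
                  + ennreal (1 - \<theta>) * (\<integral>\<^sup>+x. gauss_smooth v h (?L x) \<partial>PiM K (\<lambda>_. BG \<theta>))"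
    by (simp add: nn_integral_add nn_integral_cmult)
  also have "\<dots> = (\<Sum>B\<in>Pow (insert i K). ennreal (subset_weight \<theta> (insert i K) B)
                     * gauss_smooth (v + (\<Sum>k\<in>B. (c k)\<^sup>2)) h s)"
  proof -
    have "(\<Sum>B\<in>Pow K. ennreal (subset_weight \<theta> K B) * gauss_smooth (v + (\<Sum>k\<in>insert i B. (c k)\<^sup>2)) h s)
        = (\<Sum>B\<in>Pow K. ennreal (subset_weight \<theta> K B) * gauss_smooth (v + (c i)\<^sup>2 + (\<Sum>k\<in>B. (c k)\<^sup>2)) h s)"
    proof (intro sum.cong refl)
      fix B assume "B \<in> Pow K"
      then have "finite B" "i \<notin> B"
        using insert.hyps finite_subset by auto
      then show "ennreal (subset_weight \<theta> K B) * gauss_smooth (v + (\<Sum>k\<in>insert i B. (c k)\<^sup>2)) h s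
          = ennreal (subset_weight \<theta> K B) * gauss_smooth (v + (c i)\<^sup>2 + (\<Sum>k\<in>B. (c k)\<^sup>2)) h s"
        by (simp add: add.assoc)
    qed
    then show ?thesis
      using insert.IH[of "v + (c i)\<^sup>2"] insert.IH[of v] insert.prems
      by (simp add: sum_Pow_insert_subset_weight_ennreal[OF insert.hyps \<theta>] add.commute)
  qed
  finally show ?case .
qed (simp add: PiM_empty subset_weight_def)

lemma nn_integral_BG_normal_linear_form:
  assumes "finite K" and [measurable]: "h \<in> borel_measurable borel" and \<theta>: "0 \<le> \<theta>" "\<theta> \<le> 1"
  shows "(\<integral>\<^sup>+w. h (\<Sum>k\<in>K. c k * (fst w k + \<eta> * snd w k))
            \<partial>(PiM K (\<lambda>_. BG \<theta>) \<Otimes>\<^sub>M PiM K (\<lambda>_. std_normal_measure)))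
       = (\<Sum>B\<in>Pow K. ennreal (subset_weight \<theta> K B)
            * gauss_smooth (\<eta>\<^sup>2 * (\<Sum>k\<in>K. (c k)\<^sup>2) + (\<Sum>k\<in>B. (c k)\<^sup>2)) h 0)"
proof -
  interpret N: sigma_finite_measure "PiM K (\<lambda>_. std_normal_measure)"
    by (intro prob_space_imp_sigma_finite prob_space_PiM prob_space_std_normal_measure)
  have split: "(\<Sum>k\<in>K. c k * (x k + \<eta> * z k)) = (\<Sum>k\<in>K. c k * x k) + (\<Sum>k\<in>K. (\<eta> * c k) * z k)"
    for x z :: "_ \<Rightarrow> real"
    by (simp add: sum.distrib algebra_simps)
  have [measurable]: "(\<lambda>x. \<Sum>k\<in>K. c k * x k) \<in> borel_measurable (PiM K (\<lambda>_. BG \<theta>))"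
    "(\<lambda>z. \<Sum>k\<in>K. (\<eta> * c k) * z k) \<in> borel_measurable (PiM K (\<lambda>_. std_normal_measure))"
    by (simp_all add: borel_measurable_linear_form_PiM)
  have "(\<integral>\<^sup>+w. h (\<Sum>k\<in>K. c k * (fst w k + \<eta> * snd w k))
            \<partial>(PiM K (\<lambda>_. BG \<theta>) \<Otimes>\<^sub>M PiM K (\<lambda>_. std_normal_measure)))
     = (\<integral>\<^sup>+x. (\<integral>\<^sup>+z. h (0 + (\<Sum>k\<in>K. c k * x k) + (\<Sum>k\<in>K. (\<eta> * c k) * z k))
           \<partial>PiM K (\<lambda>_. std_normal_measure)) \<partial>PiM K (\<lambda>_. BG \<theta>))"
    unfolding split by (subst N.nn_integral_fst[symmetric]) (auto simp: case_prod_beta)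
  also have "\<dots> = (\<integral>\<^sup>+x. gauss_smooth (0 + (\<Sum>k\<in>K. (\<eta> * c k)\<^sup>2)) h (0 + (\<Sum>k\<in>K. c k * x k))
           \<partial>PiM K (\<lambda>_. BG \<theta>))"
    using gauss_smooth_std_normal_linear_form[OF assms(1) order_refl assms(2)] by simp
  also have "\<dots> = (\<Sum>B\<in>Pow K. ennreal (subset_weight \<theta> K B)
            * gauss_smooth ((0 + (\<Sum>k\<in>K. (\<eta> * c k)\<^sup>2)) + (\<Sum>k\<in>B. (c k)\<^sup>2)) h 0)"
    by (rule gauss_smooth_BG_linear_form[OF assms(1) _ assms(2) \<theta>]) (simp add: sum_nonneg)
  also have "(\<Sum>k\<in>K. (\<eta> * c k)\<^sup>2) = \<eta>\<^sup>2 * (\<Sum>k\<in>K. (c k)\<^sup>2)"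
    by (simp add: power_mult_distrib sum_distrib_left)
  finally show ?thesis by simp
qed

section \<open>Absolute moments of the standard normal law\<close>

lemma Gamma_nat_plus_half:
  "Gamma (real k + 1/2) = fact (2 * k) * sqrt pi / (4 ^ k * fact k)"
proof (induction k)
  case 0
  then show ?case by (simp add: Gamma_one_half_real)
next
  case (Suc k)
  have "real k + 1/2 \<notin> \<int>\<^sub>\<le>\<^sub>0"
    using nonpos_Ints_nonpos by fastforce
  then have "Gamma (real (Suc k) + 1/2) = (real k + 1/2) * Gamma (real k + 1/2)"
    using Gamma_plus1[of "real k + 1/2"] by (simp add: algebra_simps)
  also have "\<dots> = (real k + 1/2) * (fact (2 * k) * sqrt pi / (4 ^ k * fact k))"
    using Suc by simp
  also have "\<dots> = fact (2 * Suc k) * sqrt pi / (4 ^ Suc k * fact (Suc k))"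
  proof -
    define A where "A = (fact (2 * k) :: real)"
    define F where "F = (fact k :: real)"
    define P where "P = (4::real) ^ k"
    have "F > 0" "P > 0"
      unfolding F_def P_def by simp_all
    have e1: "fact (2 * Suc k) = (real (2 * k) + 2) * (real (2 * k) + 1) * A"
      unfolding A_def by (simp add: fact_Suc algebra_simps)
    have e2: "fact (Suc k) = (real k + 1) * F"
      unfolding F_def by (simp add: fact_Suc algebra_simps)
    have e3: "(4::real) ^ Suc k = 4 * P"
      unfolding P_def by simp
    have "(real (2 * k) + 2) * (real (2 * k) + 1) * A * sqrt pi / (4 * P * ((real k + 1) * F))
        = ((real (2 * k) + 2) * (real (2 * k) + 1) / (4 * (real k + 1))) * (A * sqrt pi / (P * F))"
      by (simp add: field_simps)
    also have "(real (2 * k) + 2) * (real (2 * k) + 1) / (4 * (real k + 1)) = real k + 1/2"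
      by (simp add: field_simps)
    finally show ?thesis
      unfolding e1 e2 e3 by (simp add: A_def F_def P_def)
  qed
  finally show ?case .
qed

lemma gamma_p_even: "gamma_p (2 * k) = fact (2 * k) / (2 ^ k * fact k)"
proof -
  have a: "(real (2 * k) + 1) / 2 = real k + 1/2" by simp
  have b: "2 powr (real (2 * k) / 2) = 2 ^ k" by (simp add: powr_realpow)
  have "(4::real) ^ k = 2 ^ k * 2 ^ k" by (simp add: power_mult_distrib[symmetric])
  then show ?thesis
    unfolding gamma_p_def a b Gamma_nat_plus_half by (simp add: field_simps)
qed

lemma gamma_p_odd: "gamma_p (2 * k + 1) = sqrt (2 / pi) * 2 ^ k * fact k"
proof -
  have a: "(real (2 * k + 1) + 1) / 2 = 1 + real k" by simp
  have "2 powr (real (2 * k + 1) / 2) = 2 powr (real k + 1/2)"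
    by (simp add: add_divide_distrib add.commute)
  also have "\<dots> = 2 ^ k * sqrt 2"
    by (simp add: powr_add powr_realpow powr_half_sqrt)
  finally show ?thesis
    unfolding gamma_p_def a Gamma_fact by (simp add: real_sqrt_divide)
qed

lemma std_normal_abs_moment:
  "has_bochner_integral lborel (\<lambda>x. std_normal_density x * \<bar>x\<bar> ^ p) (gamma_p p)"
proof (cases "even p")
  case True
  then obtain k where k: "p = 2 * k" by blast
  then have "(\<lambda>x. std_normal_density x * \<bar>x\<bar> ^ p) = (\<lambda>x. std_normal_density x * x ^ (2 * k))"
    by (simp add: power_even_abs)
  then show ?thesis
    using std_normal_moment_even[of k] k gamma_p_even by simp
next
  case False
  then obtain k where "p = 2 * k + 1" using oddE by blast
  then show ?thesis
    using std_normal_moment_abs_odd[of k] gamma_p_odd by simp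
qed

lemma gamma_p_pos: "gamma_p p > 0"
  unfolding gamma_p_def by (intro divide_pos_pos mult_pos_pos Gamma_real_pos) auto

lemma gauss_smooth_abs_power:
  assumes "u \<ge> 0" "p > 0"
  shows "gauss_smooth u (\<lambda>t. ennreal (\<bar>t\<bar> ^ p)) 0 = ennreal (gamma_p p * u powr (real p / 2))"
proof (cases "u = 0")
  case False
  then have u: "u > 0" using assms by simp
  have "gauss_smooth u (\<lambda>t. ennreal (\<bar>t\<bar> ^ p)) 0
      = (\<integral>\<^sup>+y. ennreal (normal_density 0 \<bar>sqrt u\<bar> y) * ennreal (\<bar>y\<bar> ^ p) \<partial>lborel)"
    using u by (simp add: gauss_smooth_def)
  also have "\<dots> = (\<integral>\<^sup>+g. ennreal (std_normal_density g) * ennreal (\<bar>sqrt u * g\<bar> ^ p) \<partial>lborel)"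
    by (rule nn_integral_std_normal_density_scale[symmetric]) (use u in auto)
  also have "\<dots> = (\<integral>\<^sup>+g. ennreal (sqrt u ^ p) * ennreal (std_normal_density g * \<bar>g\<bar> ^ p) \<partial>lborel)"
    by (rule nn_integral_cong) (use u in \<open>simp add: abs_mult power_mult_distrib ennreal_mult' mult_ac\<close>)
  also have "\<dots> = ennreal (sqrt u ^ p) * ennreal (gamma_p p)"
    using std_normal_abs_moment[of p] integrable_std_normal_moment_abs[of p]
    by (simp add: nn_integral_cmult nn_integral_eq_integral has_bochner_integral_integral_eq)
  also have "sqrt u ^ p = u powr (real p / 2)"
    using u by (simp add: sqrt_def root_powr_inverse powr_realpow[symmetric] powr_powr)
  finally show ?thesis
    using gamma_p_pos[of p] by (simp add: ennreal_mult'[symmetric] mult.commute)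
qed (use assms in simp)

section \<open>Moments of the random support\<close>

lemma sum_subset_weight:
  assumes "finite K"
  shows "(\<Sum>B\<in>Pow K. subset_weight \<theta> K B) = 1"
  using prod_add[OF assms, of "\<lambda>_. \<theta>" "\<lambda>_. 1 - \<theta>"] by (simp add: subset_weight_def)

lemma sum_insert_subset:
  assumes "finite K" "i \<notin> K" "B \<subseteq> K"
  shows "(\<Sum>k\<in>insert i B. q k) = q i + (\<Sum>k\<in>B. q k)"
  using assms finite_subset by (subst sum.insert) auto

lemma sum_subset_weight_sum:
  assumes "finite K"
  shows "(\<Sum>B\<in>Pow K. subset_weight \<theta> K B * (\<Sum>k\<in>B. q k)) = \<theta> * (\<Sum>k\<in>K. q k)"
  using assms
proof (induction K rule: finite_induct)
  case (insert i K)
  have "(\<Sum>B\<in>Pow K. subset_weight \<theta> K B * (\<Sum>k\<in>insert i B. q k))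
      = (\<Sum>B\<in>Pow K. q i * subset_weight \<theta> K B + subset_weight \<theta> K B * (\<Sum>k\<in>B. q k))"
    by (intro sum.cong) (simp_all add: sum_insert_subset[OF insert.hyps] algebra_simps)
  also have "\<dots> = q i + \<theta> * (\<Sum>k\<in>K. q k)"
    unfolding sum.distrib sum_distrib_left[symmetric] sum_subset_weight[OF insert.hyps(1)] insert.IH
    by simp
  finally show ?case
    unfolding sum_Pow_insert_subset_weight[OF insert.hyps] insert.IH
    using insert.hyps by (simp add: algebra_simps)
qed (simp add: subset_weight_def)

lemma sum_subset_weight_sum_sq:
  assumes "finite K"
  shows "(\<Sum>B\<in>Pow K. subset_weight \<theta> K B * (\<Sum>k\<in>B. q k)\<^sup>2)
       = \<theta>\<^sup>2 * (\<Sum>k\<in>K. q k)\<^sup>2 + \<theta> * (1 - \<theta>) * (\<Sum>k\<in>K. (q k)\<^sup>2)"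
  using assms
proof (induction K rule: finite_induct)
  case (insert i K)
  have "(\<Sum>B\<in>Pow K. subset_weight \<theta> K B * (\<Sum>k\<in>insert i B. q k)\<^sup>2)
      = (\<Sum>B\<in>Pow K. (q i)\<^sup>2 * subset_weight \<theta> K B
          + 2 * q i * (subset_weight \<theta> K B * (\<Sum>k\<in>B. q k))
          + subset_weight \<theta> K B * (\<Sum>k\<in>B. q k)\<^sup>2)"
    by (intro sum.cong) (simp_all add: sum_insert_subset[OF insert.hyps] algebra_simps power2_eq_square)
  also have "\<dots> = (q i)\<^sup>2 + 2 * q i * (\<theta> * (\<Sum>k\<in>K. q k))
      + (\<theta>\<^sup>2 * (\<Sum>k\<in>K. q k)\<^sup>2 + \<theta> * (1 - \<theta>) * (\<Sum>k\<in>K. (q k)\<^sup>2))"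
    unfolding sum.distrib sum_distrib_left[symmetric] sum_subset_weight[OF insert.hyps(1)]
      sum_subset_weight_sum[OF insert.hyps(1)] insert.IH
    by simp
  finally have insert_i: "(\<Sum>B\<in>Pow K. subset_weight \<theta> K B * (\<Sum>k\<in>insert i B. q k)\<^sup>2)
      = (q i)\<^sup>2 + 2 * q i * (\<theta> * (\<Sum>k\<in>K. q k))
        + (\<theta>\<^sup>2 * (\<Sum>k\<in>K. q k)\<^sup>2 + \<theta> * (1 - \<theta>) * (\<Sum>k\<in>K. (q k)\<^sup>2))" .
  show ?case
    unfolding sum_Pow_insert_subset_weight[OF insert.hyps] insert.IH insert_i
    using insert.hyps by (simp add: algebra_simps power2_eq_square)
qed (simp add: subset_weight_def)

lemma convex_on_powr_nonneg:
  assumes "a \<ge> 1"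
  shows "convex_on {0..} (\<lambda>x::real. x powr a)"
proof (rule convex_onI)
  have powr_le_self: "t powr a \<le> t" if "0 \<le> t" "t \<le> 1" for t :: real
  proof (cases "t = 0")
    case False
    then have "t powr a = t * t powr (a - 1)"
      using that by (simp add: powr_mult_base)
    also have "\<dots> \<le> t * 1"
      using that assms by (intro mult_left_mono powr_le1) auto
    finally show ?thesis by simp
  qed (use assms in simp)
  fix t x y :: real
  assume t: "0 < t" "t < 1" and xy: "x \<in> {0..}" "y \<in> {0..}"
  consider "x = 0" | "y = 0" | "x > 0" "y > 0"
    using xy by force
  then show "((1 - t) *\<^sub>R x + t *\<^sub>R y) powr a \<le> (1 - t) * x powr a + t * y powr a"
  proof cases
    case 1
    then show ?thesis
      using xy t powr_le_self[of t] by (simp add: powr_mult mult_right_mono)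
  next
    case 2
    then show ?thesis
      using xy t powr_le_self[of "1 - t"] by (simp add: powr_mult mult_right_mono)
  next
    case 3
    then show ?thesis
      using convex_onD[OF powr_convex[OF assms], of t x y] t by simp
  qed
qed simp

lemma convex_midpoint_deficit_nonneg:
  fixes \<phi> :: "real \<Rightarrow> real"
  assumes "convex_on {0..1} \<phi>"
  shows "0 \<le> \<phi> 1 + \<phi> 0 - 2 * \<phi> (1/2)"
  using convex_onD[OF assms, of "1/2" 0 1] by simp

text \<open>A convex function on \<open>[0,1]\<close> lies below its chord by at least
  \<open>s (1 - s)\<close> times its midpoint deficit: compare with the chords over \<open>[0,1/2]\<close> and \<open>[1/2,1]\<close>.\<close>

lemma convex_chord_deficit:
  fixes \<phi> :: "real \<Rightarrow> real"
  assumes "convex_on {0..1} \<phi>" "0 \<le> s" "s \<le> 1"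
  shows "\<phi> s \<le> (1 - s) * \<phi> 0 + s * \<phi> 1 - (\<phi> 1 + \<phi> 0 - 2 * \<phi> (1/2)) * (s * (1 - s))"
proof -
  define \<kappa> where "\<kappa> = \<phi> 1 + \<phi> 0 - 2 * \<phi> (1/2)"
  have \<kappa>: "\<kappa> \<ge> 0"
    unfolding \<kappa>_def by (rule convex_midpoint_deficit_nonneg[OF assms(1)])
  show ?thesis
  proof (cases "s \<le> 1/2")
    case True
    have "\<phi> s \<le> (1 - 2 * s) * \<phi> 0 + (2 * s) * \<phi> (1/2)"
      using convex_onD[OF assms(1), of "2 * s" 0 "1/2"] True assms by simp
    moreover have "(1 - s) * \<phi> 0 + s * \<phi> 1 - \<kappa> * (s * (1 - s))
        = (1 - 2 * s) * \<phi> 0 + (2 * s) * \<phi> (1/2) + \<kappa> * s\<^sup>2"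
      unfolding \<kappa>_def by (simp add: algebra_simps power2_eq_square)
    ultimately show ?thesis
      using \<kappa> unfolding \<kappa>_def by (smt (verit) zero_le_power2 mult_nonneg_nonneg)
  next
    case False
    have "\<phi> s \<le> (2 - 2 * s) * \<phi> (1/2) + (2 * s - 1) * \<phi> 1"
      using convex_onD[OF assms(1), of "2 * s - 1" "1/2" 1] False assms by (simp add: algebra_simps)
    moreover have "(1 - s) * \<phi> 0 + s * \<phi> 1 - \<kappa> * (s * (1 - s))
        = (2 - 2 * s) * \<phi> (1/2) + (2 * s - 1) * \<phi> 1 + \<kappa> * (1 - s)\<^sup>2"
      unfolding \<kappa>_def by (simp add: algebra_simps power2_eq_square)
    ultimately show ?thesis
      using \<kappa> unfolding \<kappa>_def by (smt (verit) zero_le_power2 mult_nonneg_nonneg)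
  qed
qed

lemma sum_subset_weight_convex_le:
  fixes \<phi> :: "real \<Rightarrow> real"
  assumes "finite K" "\<And>k. q k \<ge> 0" "(\<Sum>k\<in>K. q k) = 1" "0 \<le> \<theta>" "\<theta> \<le> 1"
    and "convex_on {0..1} \<phi>"
  shows "(\<Sum>B\<in>Pow K. subset_weight \<theta> K B * \<phi> (\<Sum>k\<in>B. q k))
      \<le> \<theta> * \<phi> 1 + (1 - \<theta>) * \<phi> 0
         - (\<phi> 1 + \<phi> 0 - 2 * \<phi> (1/2)) * \<theta> * (1 - \<theta>) * (1 - (\<Sum>k\<in>K. (q k)\<^sup>2))"
proof -
  define \<kappa> where "\<kappa> = \<phi> 1 + \<phi> 0 - 2 * \<phi> (1/2)"
  let ?S = "\<lambda>B. \<Sum>k\<in>B. q k"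
  let ?w = "subset_weight \<theta> K"
  have S01: "0 \<le> ?S B \<and> ?S B \<le> 1" if "B \<in> Pow K" for B
    using that assms(1-3) sum_mono2[of K B q] by (auto simp: sum_nonneg)
  have "(\<Sum>B\<in>Pow K. ?w B * \<phi> (?S B))
     \<le> (\<Sum>B\<in>Pow K. ?w B * ((1 - ?S B) * \<phi> 0 + ?S B * \<phi> 1 - \<kappa> * (?S B * (1 - ?S B))))"
    unfolding \<kappa>_def using S01 assms(4-6)
    by (intro sum_mono mult_left_mono convex_chord_deficit subset_weight_nonneg) auto
  also have "\<dots> = \<phi> 0 * (\<Sum>B\<in>Pow K. ?w B) + (\<phi> 1 - \<phi> 0 - \<kappa>) * (\<Sum>B\<in>Pow K. ?w B * ?S B)
       + \<kappa> * (\<Sum>B\<in>Pow K. ?w B * (?S B)\<^sup>2)"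
  proof -
    have "?w B * ((1 - ?S B) * \<phi> 0 + ?S B * \<phi> 1 - \<kappa> * (?S B * (1 - ?S B)))
        = \<phi> 0 * ?w B + (\<phi> 1 - \<phi> 0 - \<kappa>) * (?w B * ?S B) + \<kappa> * (?w B * (?S B)\<^sup>2)" for B
      by (simp add: algebra_simps power2_eq_square)
    then show ?thesis
      by (simp add: sum.distrib sum_distrib_left)
  qed
  also have "\<dots> = \<theta> * \<phi> 1 + (1 - \<theta>) * \<phi> 0 - \<kappa> * \<theta> * (1 - \<theta>) * (1 - (\<Sum>k\<in>K. (q k)\<^sup>2))"
    unfolding sum_subset_weight[OF assms(1)] sum_subset_weight_sum[OF assms(1)]
      sum_subset_weight_sum_sq[OF assms(1)] assms(3)
    by (simp add: algebra_simps power2_eq_square)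
  finally show ?thesis
    unfolding \<kappa>_def .
qed

section \<open>Hall's theorem and doubly stochastic matrices\<close>

definition hall_condition :: "'a set \<Rightarrow> ('a \<Rightarrow> 'b set) \<Rightarrow> bool" where
  "hall_condition I A \<longleftrightarrow> (\<forall>J\<subseteq>I. card J \<le> card (\<Union>(A ` J)))"

text \<open>If some proper nonempty \<open>J\<close> is tight,
  match \<open>J\<close> into \<open>\<Union>(A ` J)\<close> and the rest into the complement; otherwise every proper
  subset has slack, so any choice \<open>a \<in> A i\<close> can be removed from all other sets.\<close>

lemma hall_condition_Diff_tight:
  assumes fin: "finite I" "\<forall>i\<in>I. finite (A i)" and hall: "hall_condition I A"
    and J: "J \<subseteq> I" "card (\<Union>(A ` J)) = card J"
  shows "hall_condition (I - J) (\<lambda>i. A i - \<Union>(A ` J))"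
  unfolding hall_condition_def
proof (intro allI impI)
  fix L assume L: "L \<subseteq> I - J"
  have LJ: "L \<union> J \<subseteq> I" "L \<inter> J = {}"
    using L J by auto
  have "finite J" "finite L"
    using L J(1) fin(1) by (auto intro: finite_subset)
  then have "finite (\<Union>(A ` J))"
    using J(1) fin(2) by auto
  have "card (\<Union>i\<in>L. A i - \<Union>(A ` J)) = card (\<Union>(A ` (L \<union> J)) - \<Union>(A ` J))"
    by (rule arg_cong[where f = card]) auto
  also have "\<dots> = card (\<Union>(A ` (L \<union> J))) - card J"
    using J(2) \<open>finite (\<Union>(A ` J))\<close> fin LJ(1)
    by (subst card_Diff_subset) (auto intro: finite_subset)
  moreover have "card (L \<union> J) \<le> card (\<Union>(A ` (L \<union> J)))"
    using hall LJ(1) unfolding hall_condition_def by blast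
  moreover have "card (L \<union> J) = card L + card J"
    using LJ(2) \<open>finite J\<close> \<open>finite L\<close> by (simp add: card_Un_disjoint)
  ultimately show "card L \<le> card (\<Union>i\<in>L. A i - \<Union>(A ` J))"
    by linarith
qed

lemma hall_condition_Diff_slack:
  assumes fin: "finite I" "\<forall>i\<in>I. finite (A i)" and "i \<in> I"
    and slack: "\<And>J. J \<subseteq> I \<Longrightarrow> J \<noteq> {} \<Longrightarrow> J \<noteq> I \<Longrightarrow> card J < card (\<Union>(A ` J))"
  shows "hall_condition (I - {i}) (\<lambda>k. A k - {a})"
  unfolding hall_condition_def
proof (intro allI impI)
  fix J assume J: "J \<subseteq> I - {i}"
  show "card J \<le> card (\<Union>k\<in>J. A k - {a})"
  proof (cases "J = {}")
    case False
    have "finite (\<Union>(A ` J))"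
      using J fin finite_subset by blast
    moreover have "(\<Union>k\<in>J. A k - {a}) = \<Union>(A ` J) - {a}"
      by auto
    ultimately have "card (\<Union>(A ` J)) - 1 \<le> card (\<Union>k\<in>J. A k - {a})"
      by (simp add: card_Diff_singleton_if)
    moreover have "card J < card (\<Union>(A ` J))"
      using slack[of J] J False \<open>i \<in> I\<close> by blast
    ultimately show ?thesis by linarith
  qed simp
qed

lemma hall_step_tight:
  fixes I :: "'a set" and A :: "'a \<Rightarrow> 'b set"
  assumes IH: "\<And>I' (A' :: 'a \<Rightarrow> 'b set). card I' < card I \<Longrightarrow> finite I' \<Longrightarrow> \<forall>i\<in>I'. finite (A' i) \<Longrightarrow>
      hall_condition I' A' \<Longrightarrow> \<exists>f. inj_on f I' \<and> (\<forall>i\<in>I'. f i \<in> A' i)"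
    and fin: "finite I" "\<forall>i\<in>I. finite (A i)" and hall: "hall_condition I A"
    and J: "J \<subseteq> I" "J \<noteq> {}" "J \<noteq> I" "card (\<Union>(A ` J)) = card J"
  shows "\<exists>f. inj_on f I \<and> (\<forall>i\<in>I. f i \<in> A i)"
proof -
  define N where "N = \<Union>(A ` J)"
  have finJ: "finite J"
    using J(1) fin(1) by (rule finite_subset)
  have "card J < card I"
    using J fin by (metis psubsetI psubset_card_mono)
  moreover have "hall_condition J A"
    using hall J unfolding hall_condition_def by auto
  ultimately obtain f1 where f1: "inj_on f1 J" "\<forall>i\<in>J. f1 i \<in> A i"
    using IH[of J A] finJ fin J by auto
  have "card (I - J) < card I"
    using J fin finJ by (metis Diff_subset card_Diff_subset card_gt_0_iff diff_less finite_subset subset_empty)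
  moreover have "hall_condition (I - J) (\<lambda>i. A i - N)"
    unfolding N_def by (rule hall_condition_Diff_tight[OF fin hall J(1,4)])
  ultimately obtain f2 where f2: "inj_on f2 (I - J)" "\<forall>i\<in>I - J. f2 i \<in> A i - N"
    using IH[of "I - J" "\<lambda>i. A i - N"] fin by auto
  have f1N: "f1 i \<in> N" if "i \<in> J" for i
    using f1 that unfolding N_def by auto
  let ?f = "\<lambda>i. if i \<in> J then f1 i else f2 i"
  have "inj_on ?f I"
  proof (rule inj_onI)
    fix x y assume xy: "x \<in> I" "y \<in> I" "?f x = ?f y"
    have "?f z \<in> N \<longleftrightarrow> z \<in> J" if "z \<in> I" for z
      using f1N f2 that by auto
    then have "x \<in> J \<longleftrightarrow> y \<in> J"
      using xy by metis
    then show "x = y"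
      using xy inj_onD[OF f1(1), of x y] inj_onD[OF f2(1), of x y] by (cases "x \<in> J") auto
  qed
  moreover have "\<forall>i\<in>I. ?f i \<in> A i"
    using f1 f2 by auto
  ultimately show ?thesis by blast
qed

lemma hall_step_slack:
  fixes I :: "'a set" and A :: "'a \<Rightarrow> 'b set"
  assumes IH: "\<And>I' (A' :: 'a \<Rightarrow> 'b set). card I' < card I \<Longrightarrow> finite I' \<Longrightarrow> \<forall>i\<in>I'. finite (A' i) \<Longrightarrow>
      hall_condition I' A' \<Longrightarrow> \<exists>f. inj_on f I' \<and> (\<forall>i\<in>I'. f i \<in> A' i)"
    and fin: "finite I" "\<forall>i\<in>I. finite (A i)" and hall: "hall_condition I A" and "i \<in> I"
    and slack: "\<And>J. J \<subseteq> I \<Longrightarrow> J \<noteq> {} \<Longrightarrow> J \<noteq> I \<Longrightarrow> card J < card (\<Union>(A ` J))"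
  shows "\<exists>f. inj_on f I \<and> (\<forall>i\<in>I. f i \<in> A i)"
proof -
  have "card {i} \<le> card (\<Union>(A ` {i}))"
    using hall \<open>i \<in> I\<close> unfolding hall_condition_def by (meson empty_subsetI insert_subset)
  then obtain a where a: "a \<in> A i"
    by fastforce
  have "card I > 0"
    using \<open>i \<in> I\<close> fin by (auto simp: card_gt_0_iff)
  then have "card (I - {i}) < card I"
    using \<open>i \<in> I\<close> fin by simp
  moreover have "hall_condition (I - {i}) (\<lambda>k. A k - {a})"
    by (rule hall_condition_Diff_slack[OF fin \<open>i \<in> I\<close> slack])
  ultimately obtain f where f: "inj_on f (I - {i})" "\<forall>k\<in>I - {i}. f k \<in> A k - {a}"
    using IH[of "I - {i}" "\<lambda>k. A k - {a}"] fin by auto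
  have "inj_on (f(i := a)) I"
    using f by (auto simp: inj_on_def)
  moreover have "\<forall>k\<in>I. (f(i := a)) k \<in> A k"
    using f a by auto
  ultimately show ?thesis by blast
qed

theorem hall_marriage:
  assumes "finite I" "\<forall>i\<in>I. finite (A i)" "hall_condition I A"
  shows "\<exists>f. inj_on f I \<and> (\<forall>i\<in>I. f i \<in> A i)"
  using assms
proof (induction "card I" arbitrary: I A rule: less_induct)
  case less
  show ?case
  proof (cases "\<exists>J. J \<subseteq> I \<and> J \<noteq> {} \<and> J \<noteq> I \<and> card (\<Union>(A ` J)) = card J")
    case True
    then show ?thesis
      using hall_step_tight[OF less.hyps less.prems] by blast
  next
    case False
    have slack: "card J < card (\<Union>(A ` J))" if "J \<subseteq> I" "J \<noteq> {}" "J \<noteq> I" for J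
    proof -
      have "card J \<le> card (\<Union>(A ` J))"
        using less.prems(3) that(1) unfolding hall_condition_def by blast
      moreover have "card (\<Union>(A ` J)) \<noteq> card J"
        using False that by blast
      ultimately show ?thesis by linarith
    qed
    show ?thesis
    proof (cases "I = {}")
      case False
      then obtain i where "i \<in> I" by blast
      then show ?thesis
        using hall_step_slack[OF less.hyps less.prems \<open>i \<in> I\<close> slack] by blast
    qed simp
  qed
qed

lemma doubly_stochastic_perm_support:
  fixes q :: "'n::finite \<Rightarrow> 'n \<Rightarrow> real"
  assumes nonneg: "\<forall>i k. q i k \<ge> 0" and rows: "\<forall>i. (\<Sum>k\<in>UNIV. q i k) = s"
    and cols: "\<forall>k. (\<Sum>i\<in>UNIV. q i k) = s" and "s > 0"
  shows "\<exists>f. bij f \<and> (\<forall>i. q i (f i) > 0)"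
proof -
  define A where "A = (\<lambda>i. {k. q i k > 0})"
  have "hall_condition UNIV A"
    unfolding hall_condition_def
  proof (intro allI impI)
    fix J :: "'n set"
    define N where "N = \<Union>(A ` J)"
    have zero: "q i k = 0" if "i \<in> J" "k \<notin> N" for i k
    proof -
      have "\<not> q i k > 0"
        using that unfolding N_def A_def by blast
      then show ?thesis
        using nonneg[rule_format, of i k] by linarith
    qed
    have "s * card J = (\<Sum>i\<in>J. \<Sum>k\<in>UNIV. q i k)"
      using rows by simp
    also have "\<dots> = (\<Sum>i\<in>J. \<Sum>k\<in>N. q i k)"
      using zero by (intro sum.cong refl sum.mono_neutral_right) auto
    also have "\<dots> \<le> (\<Sum>i\<in>UNIV. \<Sum>k\<in>N. q i k)"
      using nonneg by (intro sum_mono2 sum_nonneg) auto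
    also have "\<dots> = s * card N"
      using cols by (subst sum.swap) simp
    finally show "card J \<le> card (\<Union>(A ` J))"
      using \<open>s > 0\<close> unfolding N_def by simp
  qed
  then obtain f where "inj f" "\<forall>i. f i \<in> A i"
    using hall_marriage[of UNIV A] by auto
  then show ?thesis
    using finite_UNIV_inj_surj[of f] unfolding A_def bij_def by auto
qed

lemma sum_perm_column:
  fixes f :: "'n::finite \<Rightarrow> 'n"
  assumes "bij f"
  shows "(\<Sum>i\<in>UNIV. if k = f i then c else 0) = c"
proof -
  have "(\<Sum>i\<in>UNIV. if k = f i then c else 0) = (\<Sum>i\<in>UNIV. if i = inv f k then c else 0)"
    using assms by (intro sum.cong) (auto simp: bij_inv_eq_iff)
  then show ?thesis
    by simp
qed

lemma doubly_stochastic_peel_perm: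
  fixes q :: "'n::finite \<Rightarrow> 'n \<Rightarrow> real"
  assumes nonneg: "\<forall>i k. q i k \<ge> 0" and rows: "\<forall>i. (\<Sum>k\<in>UNIV. q i k) = s"
    and cols: "\<forall>k. (\<Sum>i\<in>UNIV. q i k) = s" and f: "bij f" "\<forall>i. q i (f i) > 0"
  obtains m q' where "0 \<le> m" "m \<le> s" "\<forall>i k. q' i k \<ge> 0"
    "\<forall>i. (\<Sum>k\<in>UNIV. q' i k) = s - m" "\<forall>k. (\<Sum>i\<in>UNIV. q' i k) = s - m"
    "card {(i, k). q' i k \<noteq> 0} < card {(i, k). q i k \<noteq> 0}"
    "\<And>w. (\<Sum>i\<in>UNIV. \<Sum>k\<in>UNIV. q i k * w i k)
       = (\<Sum>i\<in>UNIV. \<Sum>k\<in>UNIV. q' i k * w i k) + m * (\<Sum>i\<in>UNIV. w i (f i))"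
proof -
  define m where "m = Min (range (\<lambda>i. q i (f i)))"
  have m_le: "m \<le> q i (f i)" for i
    unfolding m_def by (rule Min_le) auto
  have "m \<in> range (\<lambda>i. q i (f i))"
    unfolding m_def by (rule Min_in) auto
  then obtain i0 where i0: "q i0 (f i0) = m"
    by auto
  define q' where "q' = (\<lambda>i k. q i k - (if k = f i then m else 0))"
  have q'_nonneg: "\<forall>i k. q' i k \<ge> 0"
    unfolding q'_def using m_le nonneg by auto
  have q'_rows: "\<forall>i. (\<Sum>k\<in>UNIV. q' i k) = s - m"
    unfolding q'_def using rows by (simp add: sum_subtractf)
  have q'_cols: "\<forall>k. (\<Sum>i\<in>UNIV. q' i k) = s - m"
    unfolding q'_def sum_subtractf sum_perm_column[OF f(1)] using cols by simp
  have "q i (f i) \<noteq> 0" for i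
    using f(2) by (metis less_irrefl)
  then have "{(i, k). q' i k \<noteq> 0} \<subseteq> {(i, k). q i k \<noteq> 0}"
    unfolding q'_def by auto
  moreover have "(i0, f i0) \<in> {(i, k). q i k \<noteq> 0} - {(i, k). q' i k \<noteq> 0}"
    using f(2)[rule_format, of i0] i0 unfolding q'_def by simp
  ultimately have "{(i, k). q' i k \<noteq> 0} \<subset> {(i, k). q i k \<noteq> 0}"
    by blast
  then have "card {(i, k). q' i k \<noteq> 0} < card {(i, k). q i k \<noteq> 0}"
    by (simp add: psubset_card_mono)
  moreover have "(\<Sum>i\<in>UNIV. \<Sum>k\<in>UNIV. q i k * w i k)
      = (\<Sum>i\<in>UNIV. \<Sum>k\<in>UNIV. q' i k * w i k) + m * (\<Sum>i\<in>UNIV. w i (f i))" for w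
  proof -
    have "(\<Sum>k\<in>UNIV. q i k * w i k)
        = (\<Sum>k\<in>UNIV. q' i k * w i k + (if k = f i then m * w i k else 0))" for i
      by (rule sum.cong) (auto simp: q'_def algebra_simps)
    then show ?thesis
      by (simp add: sum.distrib sum_distrib_left)
  qed
  moreover have "0 \<le> m"
    using i0 f(2) by (metis less_imp_le)
  moreover have "m \<le> s"
    using q'_rows q'_nonneg sum_nonneg[of UNIV "q' i0"] by simp
  ultimately show ?thesis
    using that q'_nonneg q'_rows q'_cols by blast
qed

text \<open>A Birkhoff-type bound, by induction on the size of the support: peel off the largest
  multiple of a permutation matrix supported in \<open>q\<close>.\<close>

lemma doubly_stochastic_sum_le_perm:
  fixes q w :: "'n::finite \<Rightarrow> 'n \<Rightarrow> real"
  assumes "\<forall>i k. q i k \<ge> 0" "\<forall>i. (\<Sum>k\<in>UNIV. q i k) = s" "\<forall>k. (\<Sum>i\<in>UNIV. q i k) = s"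
  shows "\<exists>\<sigma>. bij \<sigma> \<and> (\<Sum>i\<in>UNIV. \<Sum>k\<in>UNIV. q i k * w i k) \<le> s * (\<Sum>i\<in>UNIV. w i (\<sigma> i))"
  using assms
proof (induction "card {(i, k). q i k \<noteq> 0}" arbitrary: q s rule: less_induct)
  case less
  note nonneg = less.prems(1) and rows = less.prems(2) and cols = less.prems(3)
  consider "s = 0" | "s > 0"
    using rows nonneg by (metis sum_nonneg order_le_less)
  then show ?case
  proof cases
    case 1
    then have "q i k = 0" for i k
      using rows nonneg by (metis UNIV_I finite sum_nonneg_eq_0_iff)
    then show ?thesis
      using 1 by (auto intro!: exI[of _ id])
  next
    case 2
    obtain f where f: "bij f" "\<forall>i. q i (f i) > 0"
      using doubly_stochastic_perm_support[OF nonneg rows cols 2] by blast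
    obtain m q' where m: "0 \<le> m" "m \<le> s" and q': "\<forall>i k. q' i k \<ge> 0"
      "\<forall>i. (\<Sum>k\<in>UNIV. q' i k) = s - m" "\<forall>k. (\<Sum>i\<in>UNIV. q' i k) = s - m"
      "card {(i, k). q' i k \<noteq> 0} < card {(i, k). q i k \<noteq> 0}"
      and split: "\<And>v. (\<Sum>i\<in>UNIV. \<Sum>k\<in>UNIV. q i k * v i k)
        = (\<Sum>i\<in>UNIV. \<Sum>k\<in>UNIV. q' i k * v i k) + m * (\<Sum>i\<in>UNIV. v i (f i))"
      using doubly_stochastic_peel_perm[OF nonneg rows cols f] by blast
    obtain \<sigma> where \<sigma>: "bij \<sigma>"
      "(\<Sum>i\<in>UNIV. \<Sum>k\<in>UNIV. q' i k * w i k) \<le> (s - m) * (\<Sum>i\<in>UNIV. w i (\<sigma> i))"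
      using less.hyps q' by blast
    let ?W\<sigma> = "\<Sum>i\<in>UNIV. w i (\<sigma> i)" and ?Wf = "\<Sum>i\<in>UNIV. w i (f i)"
    have bound: "(\<Sum>i\<in>UNIV. \<Sum>k\<in>UNIV. q i k * w i k) \<le> (s - m) * ?W\<sigma> + m * ?Wf"
      using \<sigma>(2) unfolding split by simp
    show ?thesis
    proof (cases "?W\<sigma> \<le> ?Wf")
      case True
      then have "(s - m) * ?W\<sigma> \<le> (s - m) * ?Wf"
        using m by (simp add: mult_left_mono)
      then show ?thesis
        using bound f(1) by (intro exI[of _ f]) (simp add: left_diff_distrib)
    next
      case False
      then have "m * ?Wf \<le> m * ?W\<sigma>"
        using m by (simp add: mult_left_mono)
      then show ?thesis
        using bound \<sigma>(1) by (intro exI[of _ \<sigma>]) (simp add: left_diff_distrib)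
    qed
  qed
qed

section \<open>Orthogonal and signed permutation matrices\<close>

lemma orthogonal_matrix_row_sum_sq:
  fixes Q :: "real^'n^'n"
  assumes "orthogonal_matrix Q"
  shows "(\<Sum>k\<in>UNIV. (Q $ i $ k)\<^sup>2) = 1"
proof -
  have "(Q ** transpose Q) $ i $ i = 1"
    using assms unfolding orthogonal_matrix_def by (simp add: mat_def)
  then show ?thesis
    by (simp add: matrix_matrix_mult_def transpose_def power2_eq_square)
qed

lemma orthogonal_matrix_col_sum_sq:
  fixes Q :: "real^'n^'n"
  assumes "orthogonal_matrix Q"
  shows "(\<Sum>i\<in>UNIV. (Q $ i $ k)\<^sup>2) = 1"
proof -
  have "orthogonal_matrix (transpose Q)"
    using assms by simp
  from orthogonal_matrix_row_sum_sq[OF this, of k] show ?thesis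
    by (simp add: transpose_def)
qed

lemma orthogonal_matrix_sum_fourth_power_le_perm:
  fixes Q :: "real^'n^'n"
  assumes "orthogonal_matrix Q"
  shows "\<exists>\<sigma>. bij \<sigma> \<and> (\<Sum>i\<in>UNIV. \<Sum>k\<in>UNIV. (Q $ i $ k) ^ 4) \<le> (\<Sum>i\<in>UNIV. (Q $ i $ \<sigma> i)\<^sup>2)"
proof -
  have "(Q $ i $ k) ^ 4 = (Q $ i $ k)\<^sup>2 * (Q $ i $ k)\<^sup>2" for i k
    by algebra
  then show ?thesis
    using doubly_stochastic_sum_le_perm[of "\<lambda>i k. (Q $ i $ k)\<^sup>2" 1 "\<lambda>i k. (Q $ i $ k)\<^sup>2"]
      orthogonal_matrix_row_sum_sq[OF assms] orthogonal_matrix_col_sum_sq[OF assms]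
    by simp
qed

definition signed_perm_of :: "('n \<Rightarrow> 'n) \<Rightarrow> ('n \<Rightarrow> real) \<Rightarrow> real^'n^'n" where
  "signed_perm_of \<sigma> s = (\<chi> i j. if j = \<sigma> i then s i else 0)"

lemma signed_perm_matrix_signed_perm_of:
  "bij \<sigma> \<Longrightarrow> (\<And>i. s i \<in> {-1, 1}) \<Longrightarrow> signed_perm_matrix (signed_perm_of \<sigma> s)"
  unfolding signed_perm_matrix_def signed_perm_of_def by auto

lemma frob_norm_sq_diff_signed_perm_of:
  fixes Q :: "real^'n^'n" and \<sigma> :: "'n \<Rightarrow> 'n"
  assumes "orthogonal_matrix Q"
  defines "s \<equiv> \<lambda>i. if Q $ i $ \<sigma> i \<ge> 0 then 1 else -1"
  shows "(frob_norm (Q - signed_perm_of \<sigma> s))\<^sup>2 = 2 * CARD('n) - 2 * (\<Sum>i\<in>UNIV. \<bar>Q $ i $ \<sigma> i\<bar>)"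
proof -
  have row: "(\<Sum>j\<in>UNIV. ((Q - signed_perm_of \<sigma> s) $ i $ j)\<^sup>2) = 2 - 2 * \<bar>Q $ i $ \<sigma> i\<bar>" for i
  proof -
    have "((Q - signed_perm_of \<sigma> s) $ i $ j)\<^sup>2
        = (Q $ i $ j)\<^sup>2 + (if j = \<sigma> i then 1 - 2 * \<bar>Q $ i $ \<sigma> i\<bar> else 0)" for j
      by (auto simp: signed_perm_of_def s_def power2_eq_square algebra_simps)
    then show ?thesis
      using orthogonal_matrix_row_sum_sq[OF assms(1), of i] by (simp add: sum.distrib)
  qed
  have "(frob_norm (Q - signed_perm_of \<sigma> s))\<^sup>2 = (\<Sum>i\<in>UNIV. \<Sum>j\<in>UNIV. ((Q - signed_perm_of \<sigma> s) $ i $ j)\<^sup>2)"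
    unfolding frob_norm_def by (simp add: sum_nonneg)
  also have "\<dots> = (\<Sum>i\<in>UNIV. 2 - 2 * \<bar>Q $ i $ \<sigma> i\<bar>)"
    unfolding row ..
  finally show ?thesis
    by (simp add: sum_subtractf sum_distrib_left)
qed

lemma exists_signed_perm_close:
  fixes Q :: "real^'n^'n"
  assumes "orthogonal_matrix Q"
  shows "\<exists>P. signed_perm_matrix P \<and>
    (frob_norm (Q - P))\<^sup>2 \<le> 2 * (CARD('n) - (\<Sum>i\<in>UNIV. \<Sum>k\<in>UNIV. (Q $ i $ k) ^ 4))"
proof -
  obtain \<sigma> where \<sigma>: "bij \<sigma>" "(\<Sum>i\<in>UNIV. \<Sum>k\<in>UNIV. (Q $ i $ k) ^ 4) \<le> (\<Sum>i\<in>UNIV. (Q $ i $ \<sigma> i)\<^sup>2)"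
    using orthogonal_matrix_sum_fourth_power_le_perm[OF assms] by blast
  define s where "s = (\<lambda>i. if Q $ i $ \<sigma> i \<ge> 0 then 1 else -1 :: real)"
  have "\<bar>Q $ i $ k\<bar> \<le> 1" for i k
    using member_le_sum[of k UNIV "\<lambda>k. (Q $ i $ k)\<^sup>2"] orthogonal_matrix_row_sum_sq[OF assms, of i]
    by (simp add: abs_square_le_1)
  then have "\<bar>Q $ i $ \<sigma> i\<bar> * \<bar>Q $ i $ \<sigma> i\<bar> \<le> \<bar>Q $ i $ \<sigma> i\<bar> * 1" for i
    by (intro mult_left_mono) auto
  then have "(Q $ i $ \<sigma> i)\<^sup>2 \<le> \<bar>Q $ i $ \<sigma> i\<bar>" for i
    by (simp add: power2_eq_square abs_mult_self_eq)
  then have "(\<Sum>i\<in>UNIV. (Q $ i $ \<sigma> i)\<^sup>2) \<le> (\<Sum>i\<in>UNIV. \<bar>Q $ i $ \<sigma> i\<bar>)"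
    by (rule sum_mono)
  then show ?thesis
    using \<sigma> frob_norm_sq_diff_signed_perm_of[OF assms, of \<sigma>]
      signed_perm_matrix_signed_perm_of[of \<sigma> s]
    by (intro exI[of _ "signed_perm_of \<sigma> s"]) (auto simp: s_def)
qed

section \<open>Entries of \<open>QY\<close>\<close>

definition moment_profile :: "real \<Rightarrow> nat \<Rightarrow> real \<Rightarrow> real" where
  "moment_profile \<eta> p s = (\<eta>\<^sup>2 + s) powr (real p / 2)"

lemma convex_on_moment_profile:
  assumes "p \<ge> 2"
  shows "convex_on {0..1} (moment_profile \<eta> p)"
proof (rule convex_onI)
  fix t x y :: real
  assume "0 < t" "t < 1" "x \<in> {0..1}" "y \<in> {0..1}"
  then have "((1 - t) *\<^sub>R (\<eta>\<^sup>2 + x) + t *\<^sub>R (\<eta>\<^sup>2 + y)) powr (real p / 2)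
      \<le> (1 - t) * (\<eta>\<^sup>2 + x) powr (real p / 2) + t * (\<eta>\<^sup>2 + y) powr (real p / 2)"
    using assms by (intro convex_onD[OF convex_on_powr_nonneg]) auto
  then show "moment_profile \<eta> p ((1 - t) *\<^sub>R x + t *\<^sub>R y)
      \<le> (1 - t) * moment_profile \<eta> p x + t * moment_profile \<eta> p y"
    unfolding moment_profile_def by (simp add: algebra_simps)
qed simp

lemma moment_profile_0:
  assumes "\<eta> \<ge> 0" "p > 0"
  shows "moment_profile \<eta> p 0 = \<eta> ^ p"
proof (cases "\<eta> = 0")
  case False
  then have "moment_profile \<eta> p 0 = (\<eta> powr 2) powr (real p / 2)"
    using assms unfolding moment_profile_def by (simp add: powr_realpow)
  also have "\<dots> = \<eta> powr real p"
    by (simp add: powr_powr)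
  also have "\<dots> = \<eta> ^ p"
    using assms False by (simp add: powr_realpow)
  finally show ?thesis .
qed (use assms in \<open>simp add: moment_profile_def\<close>)

lemma C_eta_p_eq:
  assumes "\<eta> \<ge> 0" "p > 0"
  shows "C_eta_p \<eta> p = inverse (moment_profile \<eta> p 1 + moment_profile \<eta> p 0
    - 2 * moment_profile \<eta> p (1/2))"
  using moment_profile_0[OF assms] unfolding C_eta_p_def by (simp add: moment_profile_def add.commute)

definition entry_moment_bound :: "real \<Rightarrow> real \<Rightarrow> nat \<Rightarrow> real \<Rightarrow> real" where
  "entry_moment_bound \<theta> \<eta> p r =
     \<theta> * moment_profile \<eta> p 1 + (1 - \<theta>) * moment_profile \<eta> p 0
     - (moment_profile \<eta> p 1 + moment_profile \<eta> p 0 - 2 * moment_profile \<eta> p (1/2))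
       * \<theta> * (1 - \<theta>) * (1 - r)"

lemma nn_integral_abs_power_linear_form:
  assumes "finite K" "0 \<le> \<theta>" "\<theta> \<le> 1" "p > 0" "(\<Sum>k\<in>K. (c k)\<^sup>2) = 1"
  shows "(\<integral>\<^sup>+w. ennreal (\<bar>\<Sum>k\<in>K. c k * (fst w k + \<eta> * snd w k)\<bar> ^ p)
            \<partial>(PiM K (\<lambda>_. BG \<theta>) \<Otimes>\<^sub>M PiM K (\<lambda>_. std_normal_measure)))
       = ennreal (gamma_p p * (\<Sum>B\<in>Pow K. subset_weight \<theta> K B * moment_profile \<eta> p (\<Sum>k\<in>B. (c k)\<^sup>2)))"
proof -
  have h: "(\<lambda>t::real. ennreal (\<bar>t\<bar> ^ p)) \<in> borel_measurable borel"
    by measurable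
  have "(\<integral>\<^sup>+w. ennreal (\<bar>\<Sum>k\<in>K. c k * (fst w k + \<eta> * snd w k)\<bar> ^ p)
            \<partial>(PiM K (\<lambda>_. BG \<theta>) \<Otimes>\<^sub>M PiM K (\<lambda>_. std_normal_measure)))
      = (\<Sum>B\<in>Pow K. ennreal (subset_weight \<theta> K B)
          * gauss_smooth (\<eta>\<^sup>2 + (\<Sum>k\<in>B. (c k)\<^sup>2)) (\<lambda>t. ennreal (\<bar>t\<bar> ^ p)) 0)"
    using nn_integral_BG_normal_linear_form[OF assms(1) h assms(2,3), of c \<eta>] by (simp add: assms(5))
  also have "\<dots> = (\<Sum>B\<in>Pow K. ennreal (gamma_p p * (subset_weight \<theta> K B
                      * moment_profile \<eta> p (\<Sum>k\<in>B. (c k)\<^sup>2))))"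
    using assms(2-4) gamma_p_pos[of p]
    by (intro sum.cong refl)
      (simp add: gauss_smooth_abs_power add_nonneg_nonneg sum_nonneg moment_profile_def
        subset_weight_nonneg ennreal_mult'[symmetric] mult_ac)
  also have "\<dots> = ennreal (gamma_p p * (\<Sum>B\<in>Pow K. subset_weight \<theta> K B
                      * moment_profile \<eta> p (\<Sum>k\<in>B. (c k)\<^sup>2)))"
    using assms(2,3) gamma_p_pos[of p]
    by (subst sum_ennreal)
      (auto simp: sum_distrib_left moment_profile_def subset_weight_nonneg intro!: mult_nonneg_nonneg)
  finally show ?thesis .
qed

lemma nn_integral_abs_power_linear_form_le:
  assumes "finite K" "0 \<le> \<theta>" "\<theta> \<le> 1" "p \<ge> 2" "(\<Sum>k\<in>K. (c k)\<^sup>2) = 1"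
  shows "(\<integral>\<^sup>+w. ennreal (\<bar>\<Sum>k\<in>K. c k * (fst w k + \<eta> * snd w k)\<bar> ^ p)
            \<partial>(PiM K (\<lambda>_. BG \<theta>) \<Otimes>\<^sub>M PiM K (\<lambda>_. std_normal_measure)))
       \<le> ennreal (gamma_p p * entry_moment_bound \<theta> \<eta> p (\<Sum>k\<in>K. (c k) ^ 4))"
proof -
  have "(\<Sum>k\<in>K. ((c k)\<^sup>2)\<^sup>2) = (\<Sum>k\<in>K. (c k) ^ 4)"
    by simp
  then have "(\<Sum>B\<in>Pow K. subset_weight \<theta> K B * moment_profile \<eta> p (\<Sum>k\<in>B. (c k)\<^sup>2))
      \<le> entry_moment_bound \<theta> \<eta> p (\<Sum>k\<in>K. (c k) ^ 4)"
    using sum_subset_weight_convex_le[OF assms(1) _ assms(5,2,3) convex_on_moment_profile[OF assms(4)]]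
    unfolding entry_moment_bound_def by simp
  then show ?thesis
    using assms gamma_p_pos[of p]
    by (subst nn_integral_abs_power_linear_form) (auto intro!: ennreal_leI mult_left_mono)
qed

lemma sum_UNIV_pair: "(\<Sum>kk\<in>UNIV. g kk) = (\<Sum>k\<in>UNIV. \<Sum>j\<in>UNIV. g (k, j))"
  by (simp add: sum.cartesian_product)

lemma sum_pair_column:
  fixes a :: "'n::finite \<Rightarrow> 'a::zero" and j :: "'r::finite" and F :: "'a \<Rightarrow> 'b::comm_monoid_add"
  assumes "F 0 = 0"
  shows "(\<Sum>kk\<in>UNIV. F (if snd kk = j then a (fst kk) else 0)) = (\<Sum>k\<in>UNIV. F (a k))"
proof -
  have eq: "F (if j' = j then a k else 0) = (if j' = j then F (a k) else 0)" for j' k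
    using assms by simp
  show ?thesis
    unfolding sum_UNIV_pair fst_conv snd_conv eq by simp
qed

lemma matrix_mult_Y_mat_entry:
  fixes Q :: "real^'n::finite^'n" and j :: "'r::finite"
  shows "(Q ** Y_mat \<eta> x z) $ i $ j
       = (\<Sum>kk\<in>UNIV. (if snd kk = j then Q $ i $ fst kk else 0) * (x kk + \<eta> * z kk))"
proof -
  have eq: "(if j' = j then Q $ i $ k else 0) * (x (k, j') + \<eta> * z (k, j'))
      = (if j' = j then Q $ i $ k * (x (k, j) + \<eta> * z (k, j)) else 0)" for j' k
    by simp
  show ?thesis
    unfolding sum_UNIV_pair fst_conv snd_conv eq by (simp add: matrix_matrix_mult_def Y_mat_def)
qed

lemma entry_moment_bound_nonneg:
  assumes "0 \<le> \<theta>" "\<theta> \<le> 1" "p \<ge> 2" "0 \<le> r"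
  shows "0 \<le> entry_moment_bound \<theta> \<eta> p r"
proof -
  let ?\<phi> = "moment_profile \<eta> p"
  have "0 \<le> (?\<phi> 1 + ?\<phi> 0 - 2 * ?\<phi> (1/2)) * \<theta> * (1 - \<theta>) * r"
    using assms convex_midpoint_deficit_nonneg[OF convex_on_moment_profile[OF assms(3)]] by simp
  moreover have "0 \<le> \<theta>\<^sup>2 * ?\<phi> 1 + (1 - \<theta>)\<^sup>2 * ?\<phi> 0 + 2 * \<theta> * (1 - \<theta>) * ?\<phi> (1/2)"
    using assms by (intro add_nonneg_nonneg mult_nonneg_nonneg) (auto simp: moment_profile_def)
  ultimately show ?thesis
    unfolding entry_moment_bound_def by (simp add: algebra_simps power2_eq_square)
qed

lemma sum_entry_moment_bound:
  fixes f :: "'a \<Rightarrow> real"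
  shows "(\<Sum>i\<in>A. entry_moment_bound \<theta> \<eta> p (f i))
    = card A * (\<theta> * moment_profile \<eta> p 1 + (1 - \<theta>) * moment_profile \<eta> p 0)
      - (moment_profile \<eta> p 1 + moment_profile \<eta> p 0 - 2 * moment_profile \<eta> p (1/2))
        * \<theta> * (1 - \<theta>) * (card A - (\<Sum>i\<in>A. f i))"
proof -
  define T where "T = \<theta> * moment_profile \<eta> p 1 + (1 - \<theta>) * moment_profile \<eta> p 0"
  define c where "c = (moment_profile \<eta> p 1 + moment_profile \<eta> p 0 - 2 * moment_profile \<eta> p (1/2))
    * \<theta> * (1 - \<theta>)"
  have "entry_moment_bound \<theta> \<eta> p r = (T - c) + c * r" for r
    unfolding entry_moment_bound_def T_def c_def by (simp add: algebra_simps)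
  then have "(\<Sum>i\<in>A. entry_moment_bound \<theta> \<eta> p (f i)) = card A * (T - c) + c * (\<Sum>i\<in>A. f i)"
    by (simp add: sum.distrib sum_distrib_left)
  then show ?thesis
    unfolding T_def[symmetric] c_def[symmetric] by (simp add: algebra_simps)
qed

lemma nn_integral_entry_abs_power_le:
  fixes Q :: "real^'n::finite^'n" and j :: "'r::finite"
  assumes "orthogonal_matrix Q" "p \<ge> 2" "0 \<le> \<theta>" "\<theta> \<le> 1"
  shows "(\<integral>\<^sup>+w. ennreal (\<bar>(Q ** Y_mat \<eta> (fst w) (snd w)) $ i $ j\<bar> ^ p)
            \<partial>(XZ_law \<theta> :: (('n \<times> 'r \<Rightarrow> real) \<times> ('n \<times> 'r \<Rightarrow> real)) measure))
      \<le> ennreal (gamma_p p * entry_moment_bound \<theta> \<eta> p (\<Sum>k\<in>UNIV. (Q $ i $ k) ^ 4))"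
proof -
  define c where "c kk = (if snd kk = j then Q $ i $ fst kk else 0)" for kk :: "'n \<times> 'r"
  have "(\<Sum>kk\<in>UNIV. (c kk)\<^sup>2) = 1"
    unfolding c_def sum_pair_column[where F = "\<lambda>x. x\<^sup>2", OF zero_power2]
    by (rule orthogonal_matrix_row_sum_sq[OF assms(1)])
  moreover have "(\<Sum>kk\<in>UNIV. (c kk) ^ 4) = (\<Sum>k\<in>UNIV. (Q $ i $ k) ^ 4)"
    unfolding c_def by (rule sum_pair_column) simp
  ultimately show ?thesis
    using nn_integral_abs_power_linear_form_le[of UNIV \<theta> p c \<eta>] assms
    unfolding XZ_law_def matrix_mult_Y_mat_entry c_def by simp
qed

lemma borel_measurable_XZ_law_entry:
  fixes Q :: "real^'n::finite^'n" and j :: "'r::finite"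
  shows "(\<lambda>w. (Q ** Y_mat \<eta> (fst w) (snd w)) $ i $ j)
     \<in> borel_measurable (XZ_law \<theta> :: (('n \<times> 'r \<Rightarrow> real) \<times> ('n \<times> 'r \<Rightarrow> real)) measure)"
proof -
  have "(\<lambda>w. (\<Sum>kk\<in>UNIV. (if snd kk = j then Q $ i $ fst kk else 0) * fst w kk)
            + (\<Sum>kk\<in>UNIV. (\<eta> * (if snd kk = j then Q $ i $ fst kk else 0)) * snd w kk))
     \<in> borel_measurable (XZ_law \<theta> :: (('n \<times> 'r \<Rightarrow> real) \<times> ('n \<times> 'r \<Rightarrow> real)) measure)"
    unfolding XZ_law_def
    by (intro borel_measurable_add measurable_compose[OF measurable_fst]
        measurable_compose[OF measurable_snd] borel_measurable_linear_form_PiM) auto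
  then show ?thesis
    unfolding matrix_mult_Y_mat_entry by (simp add: sum.distrib algebra_simps)
qed

lemma integral_le_if_nn_integral_le:
  assumes "f \<in> borel_measurable M" "\<And>x. 0 \<le> f x" "(\<integral>\<^sup>+x. ennreal (f x) \<partial>M) \<le> ennreal c" "0 \<le> c"
  shows "integral\<^sup>L M f \<le> c"
proof -
  have "integral\<^sup>L M f = enn2real (\<integral>\<^sup>+x. ennreal (f x) \<partial>M)"
    using assms(2) by (intro integral_eq_nn_integral[OF assms(1)]) simp
  also have "\<dots> \<le> enn2real (ennreal c)"
    using assms(3) by (rule enn2real_mono) simp
  finally show ?thesis
    using assms(4) by simp
qed

lemma integral_entry_pnorm_pow_le:
  fixes Q :: "real^'n::finite^'n"
  assumes "orthogonal_matrix Q" "p \<ge> 2" "0 \<le> \<theta>" "\<theta> \<le> 1"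
  shows "(\<integral>w. entry_pnorm_pow p (Q ** Y_mat \<eta> (fst w) (snd w))
            \<partial>(XZ_law \<theta> :: (('n \<times> 'r::finite \<Rightarrow> real) \<times> ('n \<times> 'r \<Rightarrow> real)) measure))
      \<le> CARD('r) * gamma_p p * (\<Sum>i\<in>UNIV. entry_moment_bound \<theta> \<eta> p (\<Sum>k\<in>UNIV. (Q $ i $ k) ^ 4))"
    (is "integral\<^sup>L ?M ?f \<le> _")
proof -
  let ?b = "\<lambda>i. gamma_p p * entry_moment_bound \<theta> \<eta> p (\<Sum>k\<in>UNIV. (Q $ i $ k) ^ 4)"
  have bound: "0 \<le> entry_moment_bound \<theta> \<eta> p (\<Sum>k\<in>UNIV. (Q $ i $ k) ^ 4)" for i
    using assms by (intro entry_moment_bound_nonneg) (auto simp: sum_nonneg)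
  have b: "0 \<le> ?b i" for i
    using bound gamma_p_pos[of p] by simp
  have [measurable]: "(\<lambda>w. (Q ** Y_mat \<eta> (fst w) (snd w)) $ i $ j) \<in> borel_measurable ?M" for i j
    by (rule borel_measurable_XZ_law_entry)
  have "(\<integral>\<^sup>+w. ennreal (?f w) \<partial>?M)
      = (\<Sum>i\<in>UNIV. \<Sum>j\<in>UNIV. \<integral>\<^sup>+w. ennreal (\<bar>(Q ** Y_mat \<eta> (fst w) (snd w)) $ i $ j\<bar> ^ p) \<partial>?M)"
  proof -
    have "ennreal (?f w) = (\<Sum>i\<in>UNIV. \<Sum>j\<in>UNIV. ennreal (\<bar>(Q ** Y_mat \<eta> (fst w) (snd w)) $ i $ j\<bar> ^ p))" for w
      unfolding entry_pnorm_pow_def by (simp add: sum_nonneg)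
    then show ?thesis
      by (simp only:) (simp add: nn_integral_sum del: sum_ennreal)
  qed
  also have "\<dots> \<le> (\<Sum>i\<in>UNIV. \<Sum>j\<in>(UNIV :: 'r set). ennreal (?b i))"
    using assms by (intro sum_mono nn_integral_entry_abs_power_le)
  also have "\<dots> = ennreal (\<Sum>i\<in>UNIV. \<Sum>j\<in>(UNIV :: 'r set). ?b i)"
    using b by (simp only: sum_ennreal sum_nonneg)
  also have "\<dots> = ennreal (CARD('r) * gamma_p p * (\<Sum>i\<in>UNIV. entry_moment_bound \<theta> \<eta> p (\<Sum>k\<in>UNIV. (Q $ i $ k) ^ 4)))"
    by (simp add: sum_distrib_left mult_ac)
  finally show ?thesis
    using bound gamma_p_pos[of p]
    by (intro integral_le_if_nn_integral_le) (auto simp: entry_pnorm_pow_def sum_nonneg)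
qed

lemma C_eta_p_nonneg:
  assumes "\<eta> \<ge> 0" "p \<ge> 2"
  shows "C_eta_p \<eta> p \<ge> 0"
  using C_eta_p_eq[OF assms(1), of p] assms(2)
    convex_midpoint_deficit_nonneg[OF convex_on_moment_profile[OF assms(2)], of \<eta>]
  by simp

lemma expected_entry_pnorm_deficit:
  fixes Q :: "real^'n::finite^'n"
  assumes "p \<ge> 2" "0 \<le> \<theta>" "\<theta> \<le> 1" "\<eta> \<ge> 0" "orthogonal_matrix Q"
  shows "inverse (C_eta_p \<eta> p) * \<theta> * (1 - \<theta>) * (CARD('n) - (\<Sum>i\<in>UNIV. \<Sum>k\<in>UNIV. (Q $ i $ k) ^ 4)) / CARD('n)
    \<le> \<theta> * (1 + \<eta>\<^sup>2) powr (real p / 2) + (1 - \<theta>) * \<eta> ^ p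
      - (1 / (real CARD('n) * real CARD('r) * gamma_p p)) *
        (\<integral>w. entry_pnorm_pow p (Q ** Y_mat \<eta> (fst w) (snd w))
           \<partial>(XZ_law \<theta> :: (('n \<times> 'r::finite \<Rightarrow> real) \<times> ('n \<times> 'r \<Rightarrow> real)) measure))"
proof -
  define n r \<gamma> where "n = real CARD('n)" and "r = real CARD('r)" and "\<gamma> = gamma_p p"
  define \<phi> where "\<phi> = moment_profile \<eta> p"
  define \<kappa> where "\<kappa> = \<phi> 1 + \<phi> 0 - 2 * \<phi> (1/2)"
  define T where "T = \<theta> * \<phi> 1 + (1 - \<theta>) * \<phi> 0"
  define R where "R = (\<Sum>i\<in>UNIV. \<Sum>k\<in>UNIV. (Q $ i $ k) ^ 4)"
  define I where "I = (\<integral>w. entry_pnorm_pow p (Q ** Y_mat \<eta> (fst w) (snd w))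
           \<partial>(XZ_law \<theta> :: (('n \<times> 'r \<Rightarrow> real) \<times> ('n \<times> 'r \<Rightarrow> real)) measure))"
  have pos: "n > 0" "r > 0" "\<gamma> > 0"
    unfolding n_def r_def \<gamma>_def by (simp_all add: gamma_p_pos)
  have "I \<le> r * \<gamma> * (n * T - \<kappa> * \<theta> * (1 - \<theta>) * (n - R))"
    using integral_entry_pnorm_pow_le[OF assms(5,1-3), of \<eta>, where 'r = 'r]
    unfolding I_def r_def \<gamma>_def n_def R_def T_def \<kappa>_def \<phi>_def sum_entry_moment_bound
    by (simp add: mult.assoc)
  then have "(1 / (n * r * \<gamma>)) * I \<le> (1 / (n * r * \<gamma>)) * (r * \<gamma> * (n * T - \<kappa> * \<theta> * (1 - \<theta>) * (n - R)))"
    using pos by (intro mult_left_mono) auto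
  also have "\<dots> = T - \<kappa> * \<theta> * (1 - \<theta>) * (n - R) / n"
    using pos by (simp add: field_simps)
  finally have "\<kappa> * \<theta> * (1 - \<theta>) * (n - R) / n \<le> T - (1 / (n * r * \<gamma>)) * I"
    by simp
  moreover have "inverse (C_eta_p \<eta> p) = \<kappa>"
    using C_eta_p_eq[OF assms(4), of p] assms(1) unfolding \<kappa>_def \<phi>_def by simp
  moreover have "T = \<theta> * (1 + \<eta>\<^sup>2) powr (real p / 2) + (1 - \<theta>) * \<eta> ^ p"
    using moment_profile_0[OF assms(4), of p] assms(1)
    unfolding T_def \<phi>_def by (simp add: moment_profile_def add.commute)
  ultimately show ?thesis
    unfolding I_def n_def r_def \<gamma>_def R_def by simp
qed

lemma divide_mult_inverse: "(a::real) / (b * inverse c) = c * a / b"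
  by (simp add: divide_inverse inverse_mult_distrib mult_ac)

theorem mainTheorem12:
  fixes p :: nat and \<theta> \<eta> :: real and Q :: "real^'n::finite^'n"
    and rdummy :: "'r::finite itself"
  assumes "p > 2" and "0 < \<theta>" and "\<theta> < 1" and "\<eta> \<ge> 0"
    and "orthogonal_matrix Q"
  shows "\<exists>P. signed_perm_matrix P \<and>
    \<theta> * (1 + \<eta>\<^sup>2) powr (real p / 2) + (1 - \<theta>) * \<eta> ^ p
      - (1 / (real CARD('n) * real CARD('r) * gamma_p p)) *
        (\<integral>w. entry_pnorm_pow p (Q ** Y_mat \<eta> (fst w) (snd w))
           \<partial>(XZ_law \<theta> :: (('n \<times> 'r \<Rightarrow> real) \<times> ('n \<times> 'r \<Rightarrow> real)) measure))
    \<ge> \<theta> * (1 - \<theta>) / (2 * real CARD('n) * C_eta_p \<eta> p) * (frob_norm (Q - P))\<^sup>2"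
proof -
  define n where "n = real CARD('n)"
  define R where "R = (\<Sum>i\<in>UNIV. \<Sum>k\<in>UNIV. (Q $ i $ k) ^ 4)"
  define \<kappa> where "\<kappa> = inverse (C_eta_p \<eta> p)"
  obtain P where P: "signed_perm_matrix P" "(frob_norm (Q - P))\<^sup>2 \<le> 2 * (n - R)"
    using exists_signed_perm_close[OF assms(5)] unfolding n_def R_def by blast
  have "n > 0" "\<kappa> \<ge> 0" "\<theta> * (1 - \<theta>) \<ge> 0"
    using C_eta_p_nonneg[OF assms(4), of p] assms(1-3) unfolding n_def \<kappa>_def by auto
  have "C_eta_p \<eta> p = inverse \<kappa>"
    unfolding \<kappa>_def by simp
  then have "\<theta> * (1 - \<theta>) / (2 * n * C_eta_p \<eta> p) * (frob_norm (Q - P))\<^sup>2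
      = \<kappa> * (\<theta> * (1 - \<theta>)) / (2 * n) * (frob_norm (Q - P))\<^sup>2"
    by (simp only: divide_mult_inverse)
  also have "\<dots> \<le> \<kappa> * (\<theta> * (1 - \<theta>)) / (2 * n) * (2 * (n - R))"
    using P(2) \<open>n > 0\<close> \<open>\<kappa> \<ge> 0\<close> \<open>\<theta> * (1 - \<theta>) \<ge> 0\<close> by (intro mult_left_mono) auto
  also have "\<dots> = \<kappa> * \<theta> * (1 - \<theta>) * (n - R) / n"
    using \<open>n > 0\<close> by (simp add: field_simps)
  finally have "\<theta> * (1 - \<theta>) / (2 * n * C_eta_p \<eta> p) * (frob_norm (Q - P))\<^sup>2
      \<le> \<kappa> * \<theta> * (1 - \<theta>) * (n - R) / n" .
  then show ?thesis
    using P(1) expected_entry_pnorm_deficit[OF _ _ _ assms(4,5), of p \<theta>, where 'r = 'r] assms(1-3)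
    unfolding n_def R_def \<kappa>_def by (intro exI[of _ P]) force
qed

end
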